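(* Assume $\alpha_i\ge T_G$ and $K_i>C_G$ for $i=1,2$. Then for the self-stabilizing layer clock (Algorithm SS-DC, described in the context), under any distributed (possibly unfair) daemon and for arbitrary choices of the predicates $cond,cond_1$ and of the procedures $Initialization$ and $Computation$ (which do not modify $r_1,r_2$), the predicate $WU=WU_1\wedge WU_2$ is closed and every maximal execution starting from an arbitrary configuration reaches a configuration satisfying $WU$.
   Context: $G=(V,E)$ is a finite connected undirected graph, $\mathcal N_p$ the neighbors of $p$. $T_G$ is the length of a longest chordless cycle of $G$ if $G$ has a cycle, and $2$ otherwise. $C_G$ is the minimum, over all cycle bases of $G$, of the length of a longest cycle in the basis (taken as $2$ if $G$ is acyclic). For $i\in\{1,2\}$, fix integers $\alpha_i\ge1$, $K_i\ge3$; $tail_i=\{-\alpha_i,\dots,0\}$, $tail^*_i=tail_i\setminus\{0\}$, $ring_i=\{0,\dots,K_i-1\}$, $\chi_i=tail_i\cup ring_i$, and $\varphi_i(x)=(x+1)\bmod K_i$ if $x\ge0$, $\varphi_i(x)=x+1$ if $x<0$. Fix an integer $\varrho\ge1$. Each process $p$ has registers $p.r_1\in\chi_1$, $p.r_2\in\chi_2$ and possibly other registers. Predicates at $p$, for $i=1,2$: $ConvergenceStep^i_p\equiv p.r_i\in tail^*_i\wedge\forall q\in\mathcal N_p:(q.r_i\in tail_i\wedge p.r_i\le q.r_i)$; $LocallyCorrect^i_p\equiv p.r_i\in ring_i\wedge\forall q\in\mathcal N_p:(q.r_i\in ring_i\wedge(p.r_i=q.r_i\vee p.r_i=\varphi_i(q.r_i)\vee\varphi_i(p.r_i)=q.r_i))$;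 $NormalStep^i_p\equiv p.r_i\in ring_i\wedge\forall q\in\mathcal N_p:(q.r_i=p.r_i\vee q.r_i=\varphi_i(p.r_i))$; $ResetInit^i_p\equiv\neg LocallyCorrect^i_p\wedge p.r_i\notin tail_i$; $NormalStep_p\equiv NormalStep^1_p\wedge LocallyCorrect^2_p$. Actions of $p$ (each executed atomically): $NA$: if $NormalStep_p$ then { if $p.r_1\equiv\varrho-1\pmod\varrho$ then { if $NormalStep^2_p\wedge cond$ then (if $cond_1$ then $p.r_2:=\varphi_2(p.r_2)$); execute $Initialization$ } else execute $Computation$; $p.r_1:=\varphi_1(p.r_1)$ }. For $i=1,2$: $CA_i$: if $ConvergenceStep^i_p$ then $p.r_i:=\varphi_i(p.r_i)$; $RA_i$: if $ResetInit^i_p$ then $p.r_i:=-\alpha_i$. Here $cond,cond_1$ are arbitrary predicates and $Initialization,Computation$ arbitrary procedures that only modify registers of $p$ other than $r_1,r_2$. Daemon: in each step a nonempty subset of processes having an enabled action is chosen, each executes one enabled action; a maximal execution is infinite or ends in a configuration with no enabled process. $WU_i$ holds iff for all $p$, $p.r_i\in ring_i$, and for every edge $\{p,q\}$, $\min((p.r_i-q.r_i)\bmod K_i,(q.r_i-p.r_i)\bmod K_i)\le1$. $WU=WU_1\wedge WU_2$. *)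

theory Defs
  imports Main "HOL-Library.Extended_Nat"
begin

definition graph :: "'v set \<Rightarrow> ('v \<Rightarrow> 'v \<Rightarrow> bool) \<Rightarrow> bool" where
  "graph V E \<longleftrightarrow> finite V \<and> (\<forall>u v. E u v \<longrightarrow> u \<in> V \<and> v \<in> V \<and> u \<noteq> v \<and> E v u)"

definition connected_graph :: "'v set \<Rightarrow> ('v \<Rightarrow> 'v \<Rightarrow> bool) \<Rightarrow> bool" where
  "connected_graph V E \<longleftrightarrow> graph V E \<and> V \<noteq> {} \<and>
     (\<forall>u\<in>V. \<forall>v\<in>V. (u, v) \<in> {(x, y). E x y}\<^sup>*)"

text \<open>A (simple) cycle: a list of at least 3 distinct vertices, consecutive ones
 (cyclically) adjacent. Its length is its number of vertices (= number of edges).\<close>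

definition is_cycle :: "('v \<Rightarrow> 'v \<Rightarrow> bool) \<Rightarrow> 'v list \<Rightarrow> bool" where
  "is_cycle E vs \<longleftrightarrow> length vs \<ge> 3 \<and> distinct vs \<and>
     (\<forall>i < length vs. E (vs ! i) (vs ! ((i + 1) mod length vs)))"

definition chordless_cycle :: "('v \<Rightarrow> 'v \<Rightarrow> bool) \<Rightarrow> 'v list \<Rightarrow> bool" where
  "chordless_cycle E vs \<longleftrightarrow> is_cycle E vs \<and>
     (\<forall>i < length vs. \<forall>j < length vs. E (vs ! i) (vs ! j) \<longrightarrow>
        j = (i + 1) mod length vs \<or> i = (j + 1) mod length vs)"

definition T_G :: "('v \<Rightarrow> 'v \<Rightarrow> bool) \<Rightarrow> nat" where
  "T_G E = (if \<exists>vs. chordless_cycle E vs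
            then Max {length vs | vs. chordless_cycle E vs} else 2)"

text \<open>Edges are 2-element vertex sets; the cycle space over GF(2) is the set of
 edge sets in which every vertex has even degree, with symmetric difference as sum.\<close>

definition edge_set :: "('v \<Rightarrow> 'v \<Rightarrow> bool) \<Rightarrow> 'v set set" where
  "edge_set E = {{u, v} | u v. E u v}"

definition cycle_edges :: "'v list \<Rightarrow> 'v set set" where
  "cycle_edges vs = {{vs ! i, vs ! ((i + 1) mod length vs)} | i. i < length vs}"

definition cycle_space :: "'v set \<Rightarrow> ('v \<Rightarrow> 'v \<Rightarrow> bool) \<Rightarrow> 'v set set set" where
  "cycle_space V E = {Z. Z \<subseteq> edge_set E \<and> (\<forall>v\<in>V. even (card {e \<in> Z. v \<in> e}))}"

text \<open>GF(2)-sum (iterated symmetric difference) of a finite family of edge sets.\<close>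
definition gf2_sum :: "'v set set set \<Rightarrow> 'v set set" where
  "gf2_sum F = {e. odd (card {b \<in> F. e \<in> b})}"

definition cycle_basis :: "'v set \<Rightarrow> ('v \<Rightarrow> 'v \<Rightarrow> bool) \<Rightarrow> 'v set set set \<Rightarrow> bool" where
  "cycle_basis V E B \<longleftrightarrow> finite B \<and>
     (\<forall>b\<in>B. \<exists>vs. is_cycle E vs \<and> b = cycle_edges vs) \<and>
     (\<forall>F \<subseteq> B. F \<noteq> {} \<longrightarrow> gf2_sum F \<noteq> {}) \<and>
     (\<forall>Z \<in> cycle_space V E. \<exists>F \<subseteq> B. gf2_sum F = Z)"

definition C_G :: "'v set \<Rightarrow> ('v \<Rightarrow> 'v \<Rightarrow> bool) \<Rightarrow> nat" where
  "C_G V E = (if \<exists>vs. is_cycle E vs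
              then Min {Max (card ` B) | B. cycle_basis V E B} else 2)"

definition phi :: "int \<Rightarrow> int \<Rightarrow> int" where
  "phi K x = (if x \<ge> 0 then (x + 1) mod K else x + 1)"

definition tail :: "int \<Rightarrow> int set" where "tail \<alpha> = {-\<alpha>..0}"
definition tailS :: "int \<Rightarrow> int set" where "tailS \<alpha> = {-\<alpha>..-1}"
definition ring :: "int \<Rightarrow> int set" where "ring K = {0..K-1}"
definition chi :: "int \<Rightarrow> int \<Rightarrow> int set" where "chi \<alpha> K = tail \<alpha> \<union> ring K"

text \<open>A configuration assigns to each process (r1, r2, other registers).\<close>
type_synonym ('v, 's) config = "'v \<Rightarrow> int \<times> int \<times> 's"

definition R1 :: "('v, 's) config \<Rightarrow> 'v \<Rightarrow> int" where "R1 \<gamma> p = fst (\<gamma> p)"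
definition R2 :: "('v, 's) config \<Rightarrow> 'v \<Rightarrow> int" where "R2 \<gamma> p = fst (snd (\<gamma> p))"
definition Oth :: "('v, 's) config \<Rightarrow> 'v \<Rightarrow> 's" where "Oth \<gamma> p = snd (snd (\<gamma> p))"

text \<open>Per-layer predicates; r is the value of register r_i at every process.\<close>
definition ConvergenceStep :: "int \<Rightarrow> ('v \<Rightarrow> 'v \<Rightarrow> bool) \<Rightarrow> ('v \<Rightarrow> int) \<Rightarrow> 'v \<Rightarrow> bool" where
  "ConvergenceStep \<alpha> E r p \<longleftrightarrow> r p \<in> tailS \<alpha> \<and> (\<forall>q. E p q \<longrightarrow> r q \<in> tail \<alpha> \<and> r p \<le> r q)"

definition LocallyCorrect :: "int \<Rightarrow> ('v \<Rightarrow> 'v \<Rightarrow> bool) \<Rightarrow> ('v \<Rightarrow> int) \<Rightarrow> 'v \<Rightarrow> bool" where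
  "LocallyCorrect K E r p \<longleftrightarrow> r p \<in> ring K \<and> (\<forall>q. E p q \<longrightarrow> r q \<in> ring K \<and>
      (r p = r q \<or> r p = phi K (r q) \<or> phi K (r p) = r q))"

definition NormalStepI :: "int \<Rightarrow> ('v \<Rightarrow> 'v \<Rightarrow> bool) \<Rightarrow> ('v \<Rightarrow> int) \<Rightarrow> 'v \<Rightarrow> bool" where
  "NormalStepI K E r p \<longleftrightarrow> r p \<in> ring K \<and> (\<forall>q. E p q \<longrightarrow> r q = r p \<or> r q = phi K (r p))"

definition ResetInit :: "int \<Rightarrow> int \<Rightarrow> ('v \<Rightarrow> 'v \<Rightarrow> bool) \<Rightarrow> ('v \<Rightarrow> int) \<Rightarrow> 'v \<Rightarrow> bool" where
  "ResetInit \<alpha> K E r p \<longleftrightarrow> \<not> LocallyCorrect K E r p \<and> r p \<notin> tail \<alpha>"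

datatype action = NA | CA1 | CA2 | RA1 | RA2

text \<open>Algorithm parameters: alpha1 K1 alpha2 K2 rho; the arbitrary parts:
 cond, cond1 (predicates evaluated at p in the current configuration) and
 Init, Comp (procedures: give the new value of the other registers of p).\<close>

definition enabled ::
  "('v \<Rightarrow> 'v \<Rightarrow> bool) \<Rightarrow> int \<Rightarrow> int \<Rightarrow> int \<Rightarrow> int \<Rightarrow> action \<Rightarrow> 'v \<Rightarrow> ('v, 's) config \<Rightarrow> bool" where
  "enabled E \<alpha>1 K1 \<alpha>2 K2 a p \<gamma> = (case a of
      NA \<Rightarrow> NormalStepI K1 E (R1 \<gamma>) p \<and> LocallyCorrect K2 E (R2 \<gamma>) p
    | CA1 \<Rightarrow> ConvergenceStep \<alpha>1 E (R1 \<gamma>) p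
    | CA2 \<Rightarrow> ConvergenceStep \<alpha>2 E (R2 \<gamma>) p
    | RA1 \<Rightarrow> ResetInit \<alpha>1 K1 E (R1 \<gamma>) p
    | RA2 \<Rightarrow> ResetInit \<alpha>2 K2 E (R2 \<gamma>) p)"

definition exec ::
  "('v \<Rightarrow> 'v \<Rightarrow> bool) \<Rightarrow> int \<Rightarrow> int \<Rightarrow> int \<Rightarrow> int \<Rightarrow> int \<Rightarrow>
   ('v \<Rightarrow> ('v, 's) config \<Rightarrow> bool) \<Rightarrow> ('v \<Rightarrow> ('v, 's) config \<Rightarrow> bool) \<Rightarrow>
   ('v \<Rightarrow> ('v, 's) config \<Rightarrow> 's) \<Rightarrow> ('v \<Rightarrow> ('v, 's) config \<Rightarrow> 's) \<Rightarrow>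
   action \<Rightarrow> 'v \<Rightarrow> ('v, 's) config \<Rightarrow> int \<times> int \<times> 's" where
  "exec E \<alpha>1 K1 \<alpha>2 K2 \<rho> cond cond1 Init Comp a p \<gamma> = (case a of
      NA \<Rightarrow> (if R1 \<gamma> p mod \<rho> = (\<rho> - 1) mod \<rho>
             then (phi K1 (R1 \<gamma> p),
                   (if NormalStepI K2 E (R2 \<gamma>) p \<and> cond p \<gamma> \<and> cond1 p \<gamma>
                    then phi K2 (R2 \<gamma> p) else R2 \<gamma> p),
                   Init p \<gamma>)
             else (phi K1 (R1 \<gamma> p), R2 \<gamma> p, Comp p \<gamma>))
    | CA1 \<Rightarrow> (phi K1 (R1 \<gamma> p), R2 \<gamma> p, Oth \<gamma> p)
    | CA2 \<Rightarrow> (R1 \<gamma> p, phi K2 (R2 \<gamma> p), Oth \<gamma> p)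
    | RA1 \<Rightarrow> (-\<alpha>1, R2 \<gamma> p, Oth \<gamma> p)
    | RA2 \<Rightarrow> (R1 \<gamma> p, -\<alpha>2, Oth \<gamma> p))"

text \<open>One step of the distributed (possibly unfair) daemon: a nonempty set S of
 enabled processes, each executing one of its enabled actions atomically
 (all reading the current configuration).\<close>
definition ssdc_step ::
  "'v set \<Rightarrow> ('v \<Rightarrow> 'v \<Rightarrow> bool) \<Rightarrow> int \<Rightarrow> int \<Rightarrow> int \<Rightarrow> int \<Rightarrow> int \<Rightarrow>
   ('v \<Rightarrow> ('v, 's) config \<Rightarrow> bool) \<Rightarrow> ('v \<Rightarrow> ('v, 's) config \<Rightarrow> bool) \<Rightarrow>
   ('v \<Rightarrow> ('v, 's) config \<Rightarrow> 's) \<Rightarrow> ('v \<Rightarrow> ('v, 's) config \<Rightarrow> 's) \<Rightarrow>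
   ('v, 's) config \<Rightarrow> ('v, 's) config \<Rightarrow> bool" where
  "ssdc_step V E \<alpha>1 K1 \<alpha>2 K2 \<rho> cond cond1 Init Comp \<gamma> \<gamma>' \<longleftrightarrow>
     (\<exists>S act. S \<subseteq> V \<and> S \<noteq> {} \<and>
        (\<forall>p\<in>S. enabled E \<alpha>1 K1 \<alpha>2 K2 (act p) p \<gamma>) \<and>
        (\<forall>p. \<gamma>' p = (if p \<in> S then exec E \<alpha>1 K1 \<alpha>2 K2 \<rho> cond cond1 Init Comp (act p) p \<gamma>
                      else \<gamma> p)))"

definition terminal ::
  "'v set \<Rightarrow> ('v \<Rightarrow> 'v \<Rightarrow> bool) \<Rightarrow> int \<Rightarrow> int \<Rightarrow> int \<Rightarrow> int \<Rightarrow> ('v, 's) config \<Rightarrow> bool" where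
  "terminal V E \<alpha>1 K1 \<alpha>2 K2 \<gamma> \<longleftrightarrow> \<not> (\<exists>p\<in>V. \<exists>a. enabled E \<alpha>1 K1 \<alpha>2 K2 a p \<gamma>)"

text \<open>A maximal execution e of length N (N = \<infinity> for infinite executions):
 configurations e 0, e 1, ..., e N; finite executions end in a terminal configuration.\<close>
definition maximal_execution ::
  "'v set \<Rightarrow> ('v \<Rightarrow> 'v \<Rightarrow> bool) \<Rightarrow> int \<Rightarrow> int \<Rightarrow> int \<Rightarrow> int \<Rightarrow> int \<Rightarrow>
   ('v \<Rightarrow> ('v, 's) config \<Rightarrow> bool) \<Rightarrow> ('v \<Rightarrow> ('v, 's) config \<Rightarrow> bool) \<Rightarrow>
   ('v \<Rightarrow> ('v, 's) config \<Rightarrow> 's) \<Rightarrow> ('v \<Rightarrow> ('v, 's) config \<Rightarrow> 's) \<Rightarrow>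
   (nat \<Rightarrow> ('v, 's) config) \<Rightarrow> enat \<Rightarrow> bool" where
  "maximal_execution V E \<alpha>1 K1 \<alpha>2 K2 \<rho> cond cond1 Init Comp e N \<longleftrightarrow>
     (\<forall>i. enat (Suc i) \<le> N \<longrightarrow> ssdc_step V E \<alpha>1 K1 \<alpha>2 K2 \<rho> cond cond1 Init Comp (e i) (e (Suc i))) \<and>
     (\<forall>n. N = enat n \<longrightarrow> terminal V E \<alpha>1 K1 \<alpha>2 K2 (e n))"

definition WU_i :: "'v set \<Rightarrow> ('v \<Rightarrow> 'v \<Rightarrow> bool) \<Rightarrow> int \<Rightarrow> ('v \<Rightarrow> int) \<Rightarrow> bool" where
  "WU_i V E K r \<longleftrightarrow> (\<forall>p\<in>V. r p \<in> ring K) \<and>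
     (\<forall>p q. E p q \<longrightarrow> min ((r p - r q) mod K) ((r q - r p) mod K) \<le> 1)"

definition WU :: "'v set \<Rightarrow> ('v \<Rightarrow> 'v \<Rightarrow> bool) \<Rightarrow> int \<Rightarrow> int \<Rightarrow> ('v, 's) config \<Rightarrow> bool" where
  "WU V E K1 K2 \<gamma> \<longleftrightarrow> WU_i V E K1 (R1 \<gamma>) \<and> WU_i V E K2 (R2 \<gamma>)"

end

theory Submission
  imports Defs
begin

(* Closure.  WU holds exactly when every process is locally correct in both layers.  Locally
   correct processes can only execute the normal action NA, and normal steps keep neighbouring
   clocks adjacent (equal or one phi-step apart), so WU is preserved.

   Convergence.  Along an execution each register r_i evolves as a "layer" (locale layer): in
   every step each process keeps its value, makes a normal step, a convergence step (+1 in the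
   tail) or a reset to -alpha_i.  The core result is that with alpha >= T_G a layer resets only
   finitely often.  Every reset that is not the first one of its process is caused by an
   earlier reset of a neighbour (cause_exists), and a chain of causes never returns to a
   process (chain_not_closed): chains of length at most alpha are too short, since the tail
   value -alpha has to be climbed back step by step (climb_chain); a shortest returning chain
   is a cycle of the graph, which has a chord of span < T_G <= alpha (short_chord), and such a
   chord is a cause shortcutting the chain.  Hence cause chains are shorter than |V|, resets
   stop, tail values then only grow, and eventually only normal moves occur (eventually_normal).
   A finite maximal execution ends in a terminal configuration, where no convergence step or
   reset is enabled, hence WU holds.  In an infinite execution, once only normal moves remain,
   a violation of WU freezes r_1 at some process forever; freezing spreads along the edges
   (locale normal_run), while every step changes some r_1 or makes a non-normal r_2 move --
   a contradiction. *)


lemma ring_iff: "x \<in> ring K \<longleftrightarrow> 0 \<le> x \<and> x \<le> K - 1"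
  by (auto simp: ring_def)

lemma tail_iff: "x \<in> tail a \<longleftrightarrow> -a \<le> x \<and> x \<le> 0"
  by (auto simp: tail_def)

lemma tailS_iff: "x \<in> tailS a \<longleftrightarrow> -a \<le> x \<and> x \<le> -1"
  by (auto simp: tailS_def)

lemma chi_iff: "\<alpha> \<ge> 1 \<Longrightarrow> K \<ge> 3 \<Longrightarrow> x \<in> chi \<alpha> K \<longleftrightarrow> -\<alpha> \<le> x \<and> x \<le> K - 1"
  by (auto simp: chi_def tail_iff ring_iff)

lemma phi_ring_eq:
  assumes "0 \<le> x" "x \<le> K - 1"
  shows "phi K x = (if x = K - 1 then 0 else x + 1)"
  using assms by (cases "x = K - 1") (simp_all add: phi_def)

lemma phi_neg: "x < 0 \<Longrightarrow> phi K x = x + 1"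
  by (simp add: phi_def)

lemma phi_in_ring: "0 \<le> x \<Longrightarrow> x \<le> K - 1 \<Longrightarrow> 0 \<le> phi K x \<and> phi K x \<le> K - 1"
  by (simp add: phi_ring_eq)

lemma phi_ne: "0 \<le> x \<Longrightarrow> x \<le> K - 1 \<Longrightarrow> K \<ge> 3 \<Longrightarrow> phi K x \<noteq> x"
  by (simp add: phi_ring_eq)

lemma phi_phi_ne: "0 \<le> x \<Longrightarrow> x \<le> K - 1 \<Longrightarrow> K \<ge> 3 \<Longrightarrow> phi K (phi K x) \<noteq> x"
  using phi_in_ring[of x K] by (auto simp: phi_ring_eq split: if_splits)

definition adjacent :: "int \<Rightarrow> int \<Rightarrow> int \<Rightarrow> bool" where
  "adjacent K a b \<longleftrightarrow> a = b \<or> a = phi K b \<or> phi K a = b"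

lemma adjacent_step:
  assumes K: "K \<ge> 3" and ra: "0 \<le> a" "a \<le> K - 1" and rb: "0 \<le> b" "b \<le> K - 1"
    and ab: "adjacent K a b"
    and a': "a' = a \<or> (a' = phi K a \<and> (b = a \<or> b = phi K a))"
    and b': "b' = b \<or> (b' = phi K b \<and> (a = b \<or> a = phi K b))"
  shows "adjacent K a' b'"
  using a' b' ab phi_ne[OF ra K] phi_ne[OF rb K] phi_phi_ne[OF ra K] phi_phi_ne[OF rb K]
  unfolding adjacent_def by metis

lemma adjacent_iff_cyclic_dist:
  assumes K: "K \<ge> 3" and ra: "0 \<le> a" "a \<le> K - 1" and rb: "0 \<le> b" "b \<le> K - 1"
  shows "adjacent K a b \<longleftrightarrow> min ((a - b) mod K) ((b - a) mod K) \<le> 1"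
proof -
  have diff_mod: "(x - y) mod K = (if x \<ge> y then x - y else x - y + K)"
    if "0 \<le> x" "x \<le> K - 1" "0 \<le> y" "y \<le> K - 1" for x y
  proof (cases "x \<ge> y")
    case False
    have "(x - y) mod K = (x - y + K) mod K" by simp
    also have "\<dots> = x - y + K" using False that by (intro mod_pos_pos_trivial) auto
    finally show ?thesis using False by simp
  qed (use that in simp)
  show ?thesis
    unfolding adjacent_def diff_mod[OF ra rb] diff_mod[OF rb ra] using ra rb K
    by (auto simp: phi_ring_eq split: if_splits)
qed


lemma discrete_crossing:
  fixes f :: "nat \<Rightarrow> int"
  assumes "a \<le> b" "f a < w" "w \<le> f b"
  shows "\<exists>c. a \<le> c \<and> c < b \<and> f c < w \<and> w \<le> f (Suc c)"
  using assms
proof (induction b)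
  case (Suc b)
  show ?case
  proof (cases "a = Suc b \<or> w \<le> f b")
    case True
    then obtain c where "a \<le> c \<and> c < b \<and> f c < w \<and> w \<le> f (Suc c)"
      using Suc by (metis le_SucE not_le)
    then show ?thesis by (intro exI[of _ c]) auto
  next
    case False
    then show ?thesis using Suc.prems by (intro exI[of _ b]) auto
  qed
qed simp

lemma last_change:
  assumes "x \<le> b" "f x \<noteq> f b"
  shows "\<exists>c. x \<le> c \<and> c < b \<and> f c \<noteq> f b \<and> f (Suc c) = f b"
  using assms
proof (induction b)
  case (Suc b)
  have xb: "x \<le> b" using Suc.prems by (cases "x = Suc b") auto
  show ?case
  proof (cases "f b = f (Suc b)")
    case True
    then show ?thesis using Suc.IH xb Suc.prems(2) by fastforce
  next
    case False
    then show ?thesis using xb by (intro exI[of _ b]) auto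
  qed
qed simp

lemma mono_bounded_eventually_const:
  fixes f :: "nat \<Rightarrow> int"
  assumes mono: "\<And>t. T \<le> t \<Longrightarrow> f t \<le> f (Suc t)" and bd: "\<And>t. f t \<le> B"
  shows "\<exists>T'. \<forall>t\<ge>T'. f (Suc t) = f t"
proof (rule ccontr)
  assume never_const: "\<not> ?thesis"
  have mono': "f t \<le> f t'" if "T \<le> t" "t \<le> t'" for t t'
    using that(2)
  proof (induction t' rule: dec_induct)
    case (step n)
    then show ?case using mono[of n] that(1) by linarith
  qed simp
  have grows: "\<exists>t\<ge>T. f T + int n \<le> f t" for n
  proof (induction n)
    case (Suc n)
    then obtain t where t: "T \<le> t" "f T + int n \<le> f t" by auto
    from never_const obtain t' where t': "t \<le> t'" "f (Suc t') \<noteq> f t'" by auto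
    have "f t \<le> f t'" "f t' \<le> f (Suc t')" using mono' mono t t' by auto
    then show ?case using t t' by (intro exI[of _ "Suc t'"]) auto
  qed auto
  obtain t where "f T + int (nat (B - f T + 1)) \<le> f t" using grows by blast
  then show False using bd[of t] bd[of T] by simp
qed


section \<open>Chordless cycles\<close>

lemma graph_edge: "graph V E \<Longrightarrow> E u v \<Longrightarrow> u \<in> V \<and> v \<in> V \<and> u \<noteq> v \<and> E v u"
  unfolding graph_def by blast

lemma T_G_bound:
  assumes G: "graph V E" and c: "chordless_cycle E vs"
  shows "length vs \<le> T_G E"
proof -
  have len_le: "length ws \<le> card V" if "chordless_cycle E ws" for ws
  proof -
    have cyc: "distinct ws" "\<forall>i<length ws. E (ws ! i) (ws ! ((i + 1) mod length ws))"
      using that by (auto simp: chordless_cycle_def is_cycle_def)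
    have "set ws \<subseteq> V"
    proof
      fix v assume "v \<in> set ws"
      then obtain i where "i < length ws" "ws ! i = v" by (auto simp: in_set_conv_nth)
      then have "E v (ws ! ((i + 1) mod length ws))" using cyc(2) by auto
      from graph_edge[OF G this] show "v \<in> V" by simp
    qed
    then have "card (set ws) \<le> card V" using G by (simp add: card_mono graph_def)
    then show ?thesis using distinct_card[OF cyc(1)] by simp
  qed
  let ?S = "{length vs | vs. chordless_cycle E vs}"
  have "?S \<subseteq> {..card V}" using len_le by blast
  then have "finite ?S" by (rule finite_subset) simp
  then show ?thesis using c by (auto simp: T_G_def intro: Max_ge)
qed

text \<open>Chordless cycles have at least three vertices, so \<open>T_G \<ge> 2\<close> in any case.\<close>

lemma T_G_ge_2:
  assumes G: "graph V E"
  shows "2 \<le> T_G E"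
proof (cases "\<exists>vs. chordless_cycle E vs")
  case True
  then obtain vs where c: "chordless_cycle E vs" by blast
  then have "length vs \<ge> 3" by (simp add: chordless_cycle_def is_cycle_def)
  then show ?thesis using T_G_bound[OF G c] by simp
qed (simp add: T_G_def)

lemma chordless_cycle_of_path:
  assumes G: "graph V E" and n3: "3 \<le> n" and inj: "inj_on f {..<n}"
    and path: "\<And>k. Suc k < n \<Longrightarrow> E (f k) (f (Suc k))" and closing: "E (f (n - 1)) (f 0)"
    and no_chord: "\<And>a b. a + 2 \<le> b \<Longrightarrow> b < n \<Longrightarrow> \<not> (a = 0 \<and> b = n - 1) \<Longrightarrow> \<not> E (f a) (f b)"
  shows "chordless_cycle E (map f [0..<n])"
proof -
  have edge: "E (f i) (f ((i + 1) mod n))" if "i < n" for i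
  proof (cases "Suc i < n")
    case False
    then have "i = n - 1" "i + 1 = n" using that by auto
    then show ?thesis using closing by simp
  qed (use path in simp)
  have ordered: "l = (i + 1) mod n \<or> i = (l + 1) mod n"
    if "i < l" "l < n" "E (f i) (f l)" for i l
  proof (cases "l = Suc i")
    case True
    then show ?thesis using that by simp
  next
    case False
    then have "i = 0 \<and> l = n - 1" using no_chord[of i l] that by fastforce
    then show ?thesis using n3 by simp
  qed
  have consecutive: "l = (i + 1) mod n \<or> i = (l + 1) mod n"
    if "i < n" "l < n" "E (f i) (f l)" for i l
  proof -
    have "i \<noteq> l" using graph_edge[OF G that(3)] by auto
    then show ?thesis
      using ordered[of i l] ordered[of l i] that graph_edge[OF G that(3)] by linarith
  qed
  have "distinct (map f [0..<n])" using inj by (simp add: distinct_map lessThan_atLeast0)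
  then show ?thesis
    unfolding chordless_cycle_def is_cycle_def using n3 edge consecutive by simp
qed

text \<open>A path of distinct vertices \<open>f a, \<dots>, f b\<close> closed by an edge contains a chord, or
 the closing edge itself, spanning fewer than \<open>T_G\<close> path steps: a shortest such edge closes a
 chordless cycle.\<close>

lemma short_chord:
  assumes G: "graph V E" and inj: "inj_on f {a..b}"
    and path: "\<And>k. a \<le> k \<Longrightarrow> k < b \<Longrightarrow> E (f k) (f (Suc k))"
    and ab: "a + 2 \<le> b" and closing: "E (f a) (f b)"
  shows "\<exists>x y. a \<le> x \<and> x + 2 \<le> y \<and> y \<le> b \<and> E (f x) (f y) \<and> y - x < T_G E"
proof -
  define CH where "CH = {(x, y). a \<le> x \<and> x + 2 \<le> y \<and> y \<le> b \<and> E (f x) (f y)}"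
  have "(a, b) \<in> CH" using ab closing by (simp add: CH_def)
  then obtain z where zCH: "z \<in> CH" and zmin: "\<And>w. w \<in> CH \<Longrightarrow> snd z - fst z \<le> snd w - fst w"
    using ex_has_least_nat[of "\<lambda>w. w \<in> CH" "(a, b)" "\<lambda>w. snd w - fst w"] by blast
  obtain x y where z: "z = (x, y)" by (cases z)
  have xy: "a \<le> x" "x + 2 \<le> y" "y \<le> b" "E (f x) (f y)" using zCH by (auto simp: CH_def z)
  define n where "n = y - x + 1"
  have "chordless_cycle E (map (\<lambda>k. f (x + k)) [0..<n])"
  proof (rule chordless_cycle_of_path[OF G])
    show "3 \<le> n" using xy by (simp add: n_def)
    show "inj_on (\<lambda>k. f (x + k)) {..<n}"
    proof (rule inj_onI)
      fix i j assume ij: "i \<in> {..<n}" "j \<in> {..<n}" and eq: "f (x + i) = f (x + j)"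
      have "x + i \<in> {a..b}" "x + j \<in> {a..b}" using ij xy by (auto simp: n_def)
      then show "i = j" using inj_onD[OF inj eq] by simp
    qed
    show "E (f (x + k)) (f (x + Suc k))" if "Suc k < n" for k
      using path[of "x + k"] that xy by (simp add: n_def)
    show "E (f (x + (n - 1))) (f (x + 0))"
      using xy graph_edge[OF G xy(4)] by (simp add: n_def)
    show "\<not> E (f (x + i)) (f (x + j))" if "i + 2 \<le> j" "j < n" "\<not> (i = 0 \<and> j = n - 1)" for i j
    proof
      assume "E (f (x + i)) (f (x + j))"
      then have "(x + i, x + j) \<in> CH" using that xy by (auto simp: CH_def n_def)
      from zmin[OF this] show False using that by (auto simp: z n_def)
    qed
  qed
  from T_G_bound[OF G this] have "y - x < T_G E" by (simp add: n_def)
  then show ?thesis using xy by blast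
qed


definition normal_move :: "int \<Rightarrow> ('v \<Rightarrow> 'v \<Rightarrow> bool) \<Rightarrow> ('v \<Rightarrow> int) \<Rightarrow> ('v \<Rightarrow> int) \<Rightarrow> 'v \<Rightarrow> bool" where
  "normal_move K E r r' p \<longleftrightarrow> r' p = r p \<or> (NormalStepI K E r p \<and> r' p = phi K (r p))"

definition layer_move :: "int \<Rightarrow> int \<Rightarrow> ('v \<Rightarrow> 'v \<Rightarrow> bool) \<Rightarrow> ('v \<Rightarrow> int) \<Rightarrow> ('v \<Rightarrow> int) \<Rightarrow> 'v \<Rightarrow> bool" where
  "layer_move \<alpha> K E r r' p \<longleftrightarrow> normal_move K E r r' p
     \<or> (ConvergenceStep \<alpha> E r p \<and> r' p = r p + 1) \<or> (ResetInit \<alpha> K E r p \<and> r' p = -\<alpha>)"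

lemma layer_move_cases:
  assumes "layer_move \<alpha> K E r r' p"
  obtains "r' p = r p"
    | "NormalStepI K E r p" "r' p = phi K (r p)"
    | "ConvergenceStep \<alpha> E r p" "r' p = r p + 1"
    | "ResetInit \<alpha> K E r p" "r' p = -\<alpha>"
  using assms unfolding layer_move_def normal_move_def by blast

lemma layer_move_dom:
  assumes "\<alpha> \<ge> 1" "K \<ge> 3" "-\<alpha> \<le> r p" "r p \<le> K - 1" "layer_move \<alpha> K E r r' p"
  shows "-\<alpha> \<le> r' p \<and> r' p \<le> K - 1"
  using assms(5)
proof (cases rule: layer_move_cases)
  case 2
  then show ?thesis using phi_in_ring[of "r p" K] assms(1) by (auto simp: NormalStepI_def ring_iff)
next
  case 3
  then show ?thesis using assms(2) by (auto simp: ConvergenceStep_def tailS_iff)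
qed (use assms in auto)

lemma LocallyCorrect_iff: "LocallyCorrect K E r p \<longleftrightarrow> 0 \<le> r p \<and> r p \<le> K - 1 \<and>
   (\<forall>q. E p q \<longrightarrow> 0 \<le> r q \<and> r q \<le> K - 1 \<and> adjacent K (r p) (r q))"
  by (auto simp: LocallyCorrect_def ring_iff adjacent_def)

lemma NormalStepI_LocallyCorrect: "NormalStepI K E r p \<Longrightarrow> LocallyCorrect K E r p"
  using phi_in_ring[of "r p" K] by (auto simp: NormalStepI_def LocallyCorrect_def ring_iff)

lemma LocallyCorrect_layer_move:
  "LocallyCorrect K E r p \<Longrightarrow> layer_move \<alpha> K E r r' p \<Longrightarrow> normal_move K E r r' p"
  by (auto simp: layer_move_def LocallyCorrect_def ConvergenceStep_def ResetInit_def ring_iff tailS_iff)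

lemma LocallyCorrect_normal_move:
  assumes K: "K \<ge> 3" and lc: "LocallyCorrect K E r p" and sym: "\<And>q. E p q \<Longrightarrow> E q p"
    and mv: "\<And>q. q = p \<or> E p q \<Longrightarrow> normal_move K E r r' q"
  shows "LocallyCorrect K E r' p"
proof -
  have pr: "0 \<le> r p" "r p \<le> K - 1" using lc by (auto simp: LocallyCorrect_iff)
  have p': "r' p = r p \<or> (r' p = phi K (r p) \<and> (\<forall>q. E p q \<longrightarrow> r q = r p \<or> r q = phi K (r p)))"
    using mv[of p] by (auto simp: normal_move_def NormalStepI_def)
  have "0 \<le> r' q \<and> r' q \<le> K - 1 \<and> adjacent K (r' p) (r' q)" if Epq: "E p q" for q
  proof -
    have qr: "0 \<le> r q" "r q \<le> K - 1" and adj: "adjacent K (r p) (r q)"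
      using lc Epq by (auto simp: LocallyCorrect_iff)
    have q': "r' q = r q \<or> (r' q = phi K (r q) \<and> (r p = r q \<or> r p = phi K (r q)))"
      using mv[of q] Epq sym[OF Epq] by (auto simp: normal_move_def NormalStepI_def)
    have "adjacent K (r' p) (r' q)"
      using adjacent_step[OF K pr qr adj _ q'] p' Epq by blast
    then show ?thesis using q' phi_in_ring[OF qr] qr by auto
  qed
  moreover have "0 \<le> r' p \<and> r' p \<le> K - 1" using p' pr phi_in_ring[OF pr] by auto
  ultimately show ?thesis unfolding LocallyCorrect_iff by blast
qed

lemma LocallyCorrect_normal_moves:
  assumes K: "K \<ge> 3" and G: "graph V E" and lc: "\<forall>p\<in>V. LocallyCorrect K E r p"
    and mv: "\<forall>p\<in>V. normal_move K E r r' p"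
  shows "\<forall>p\<in>V. LocallyCorrect K E r' p"
proof
  fix p assume pV: "p \<in> V"
  show "LocallyCorrect K E r' p"
  proof (rule LocallyCorrect_normal_move[OF K])
    show "LocallyCorrect K E r p" using lc pV by blast
    show "E q p" if "E p q" for q using graph_edge[OF G that] by simp
    show "normal_move K E r r' q" if "q = p \<or> E p q" for q
    proof -
      have "q \<in> V" using that pV graph_edge[OF G, of p q] by blast
      then show ?thesis using mv by blast
    qed
  qed
qed

lemma WU_i_iff_LocallyCorrect:
  assumes K: "K \<ge> 3" and G: "graph V E"
  shows "WU_i V E K r \<longleftrightarrow> (\<forall>p\<in>V. LocallyCorrect K E r p)"
proof -
  have edge_iff: "(0 \<le> r q \<and> r q \<le> K - 1 \<and> adjacent K (r p) (r q))
      \<longleftrightarrow> min ((r p - r q) mod K) ((r q - r p) mod K) \<le> 1"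
    if "E p q" "\<forall>v\<in>V. 0 \<le> r v \<and> r v \<le> K - 1" for p q
  proof -
    have "p \<in> V" "q \<in> V" using graph_edge[OF G that(1)] by auto
    then show ?thesis using adjacent_iff_cyclic_dist[OF K] that(2) by auto
  qed
  show ?thesis
  proof
    assume w: "WU_i V E K r"
    then have ring_all: "\<forall>v\<in>V. 0 \<le> r v \<and> r v \<le> K - 1" by (simp add: WU_i_def ring_iff)
    show "\<forall>p\<in>V. LocallyCorrect K E r p"
      using w edge_iff[OF _ ring_all] ring_all unfolding LocallyCorrect_iff WU_i_def by blast
  next
    assume lc: "\<forall>p\<in>V. LocallyCorrect K E r p"
    then have ring_all: "\<forall>v\<in>V. 0 \<le> r v \<and> r v \<le> K - 1" by (simp add: LocallyCorrect_iff)
    have "min ((r p - r q) mod K) ((r q - r p) mod K) \<le> 1" if "E p q" for p q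
    proof -
      have "LocallyCorrect K E r p" using lc graph_edge[OF G that] by blast
      then show ?thesis using that edge_iff[OF that ring_all] by (simp add: LocallyCorrect_iff)
    qed
    then show "WU_i V E K r" using ring_all by (simp add: WU_i_def ring_iff)
  qed
qed

text \<open>A layer in which no process can execute a convergence step or a reset (as in a
 terminal configuration) has no tail values: a process with minimal negative value could
 execute a convergence step, unless a neighbour with positive value could reset.\<close>

lemma quiet_layer_nonneg:
  assumes G: "graph V E" and dom: "\<forall>p\<in>V. -\<alpha> \<le> r p \<and> r p \<le> K - 1"
    and quiet: "\<forall>p\<in>V. \<not> ConvergenceStep \<alpha> E r p \<and> \<not> ResetInit \<alpha> K E r p"
  shows "\<forall>p\<in>V. 0 \<le> r p"
proof (rule ccontr)
  assume "\<not> ?thesis"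
  then obtain p0 where p0: "p0 \<in> V" "r p0 < 0" by auto
  have fin: "finite V" using G by (simp add: graph_def)
  obtain p where pV: "p \<in> V" and pm: "r p = Min (r ` V)"
    using Min_in[of "r ` V"] fin p0(1) by fastforce
  have pmin: "r p \<le> r q" if "q \<in> V" for q using fin that by (simp add: pm)
  have neg: "r p < 0" using pmin[OF p0(1)] p0(2) by simp
  show False
  proof (cases "\<forall>q. E p q \<longrightarrow> r q \<le> 0")
    case True
    then have "ConvergenceStep \<alpha> E r p"
      using neg dom pV pmin graph_edge[OF G] by (auto simp: ConvergenceStep_def tailS_iff tail_iff)
    then show False using quiet pV by simp
  next
    case False
    then obtain q where q: "E p q" "r q > 0" by auto
    have qV: "q \<in> V" and Eqp: "E q p" using graph_edge[OF G q(1)] by auto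
    have "\<not> LocallyCorrect K E r q" using Eqp neg by (auto simp: LocallyCorrect_iff)
    then have "ResetInit \<alpha> K E r q" using q(2) by (simp add: ResetInit_def tail_iff)
    then show False using quiet qV by simp
  qed
qed

text \<open>In such a layer every process is locally correct: a process that is not must have
 value 0 (else it could reset), and then its incompatible neighbour could reset.\<close>

lemma quiet_layer_LocallyCorrect:
  assumes G: "graph V E" and dom: "\<forall>p\<in>V. -\<alpha> \<le> r p \<and> r p \<le> K - 1"
    and quiet: "\<forall>p\<in>V. \<not> ConvergenceStep \<alpha> E r p \<and> \<not> ResetInit \<alpha> K E r p"
  shows "\<forall>p\<in>V. LocallyCorrect K E r p"
proof (rule ccontr)
  have nonneg: "\<forall>p\<in>V. 0 \<le> r p" using quiet_layer_nonneg[OF G dom quiet] .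
  have can_reset: "ResetInit \<alpha> K E r p" if "p \<in> V" "\<not> LocallyCorrect K E r p" "r p \<noteq> 0" for p
    using that nonneg by (auto simp: ResetInit_def tail_iff)
  assume "\<not> ?thesis"
  then obtain p where pV: "p \<in> V" and nlc: "\<not> LocallyCorrect K E r p" by auto
  have p0: "r p = 0" using can_reset[OF pV nlc] quiet pV by blast
  then obtain q where q: "E p q" "\<not> adjacent K (r p) (r q)"
    using nlc nonneg dom pV graph_edge[OF G] by (auto simp: LocallyCorrect_iff)
  have qV: "q \<in> V" and Eqp: "E q p" using graph_edge[OF G q(1)] by auto
  have "r q \<noteq> 0" using q(2) p0 by (simp add: adjacent_def)
  moreover have "\<not> LocallyCorrect K E r q"
    using Eqp q(2) by (auto simp: LocallyCorrect_iff adjacent_def)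
  ultimately show False using can_reset[OF qV] quiet qV by blast
qed


section \<open>Resets in a single layer\<close>

text \<open>A layer is the trajectory \<open>r t\<close> of one register along an execution: values start in the
 domain and every process makes a (possibly trivial) move in every step.\<close>

locale layer =
  fixes V :: "'v set" and E :: "'v \<Rightarrow> 'v \<Rightarrow> bool" and \<alpha> K :: int
    and r :: "nat \<Rightarrow> 'v \<Rightarrow> int"
  assumes G: "graph V E" and a1: "\<alpha> \<ge> 1" and k3: "K \<ge> 3"
    and dom0: "\<forall>p\<in>V. -\<alpha> \<le> r 0 p \<and> r 0 p \<le> K - 1"
    and move: "\<And>t p. p \<in> V \<Longrightarrow> layer_move \<alpha> K E (r t) (r (Suc t)) p"
begin

abbreviation LC :: "nat \<Rightarrow> 'v \<Rightarrow> bool" where "LC t p \<equiv> LocallyCorrect K E (r t) p"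

lemma dom: "p \<in> V \<Longrightarrow> -\<alpha> \<le> r t p \<and> r t p \<le> K - 1"
  by (induction t) (use dom0 layer_move_dom[OF a1 k3 _ _ move] in auto)

lemma move_neg:
  assumes "p \<in> V" "r t p < 0" "r (Suc t) p \<noteq> r t p"
  shows "ConvergenceStep \<alpha> E (r t) p \<and> r (Suc t) p = r t p + 1"
  using move[OF assms(1), of t]
  by (cases rule: layer_move_cases)
    (use assms dom[OF assms(1), of t] in \<open>auto simp: NormalStepI_def ResetInit_def ring_iff tail_iff\<close>)

lemma move_up:
  assumes "p \<in> V" "r (Suc t) p \<ge> 1" "r (Suc t) p \<noteq> r t p"
  shows "NormalStepI K E (r t) p \<and> r (Suc t) p = phi K (r t p)"
  using move[OF assms(1), of t]
  by (cases rule: layer_move_cases) (use assms a1 in \<open>auto simp: ConvergenceStep_def tailS_iff\<close>)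

lemma move_ring:
  assumes "p \<in> V" "0 \<le> r t p" "r (Suc t) p \<noteq> r t p"
  shows "(NormalStepI K E (r t) p \<and> r (Suc t) p = phi K (r t p))
     \<or> (1 \<le> r t p \<and> \<not> LC t p \<and> r (Suc t) p = -\<alpha>)"
  using move[OF assms(1), of t]
  by (cases rule: layer_move_cases)
    (use assms a1 in \<open>auto simp: ConvergenceStep_def tailS_iff ResetInit_def tail_iff\<close>)

lemma frozen_pair:
  assumes "E p q" "r t p \<ge> 1" "r t q < 0"
  shows "r (Suc t) q = r t q \<and> (r (Suc t) p = r t p \<or> r (Suc t) p = -\<alpha>)"
proof
  have qV: "q \<in> V" and pV: "p \<in> V" and Eqp: "E q p" using graph_edge[OF G assms(1)] by auto
  show "r (Suc t) q = r t q"
  proof (rule ccontr)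
    assume "r (Suc t) q \<noteq> r t q"
    from move_neg[OF qV assms(3) this] have "ConvergenceStep \<alpha> E (r t) q" by simp
    then show False using Eqp assms(2) by (auto simp: ConvergenceStep_def tail_iff)
  qed
  show "r (Suc t) p = r t p \<or> r (Suc t) p = -\<alpha>"
  proof (rule ccontr)
    assume "\<not> ?thesis"
    then have "NormalStepI K E (r t) p" using move_ring[OF pV] assms(2) by force
    then show False using assms phi_in_ring[of "r t p" K] by (auto simp: NormalStepI_def ring_iff)
  qed
qed

definition reset :: "'v \<Rightarrow> nat \<Rightarrow> bool" where
  "reset p t \<longleftrightarrow> p \<in> V \<and> r t p \<ge> 1 \<and> r (Suc t) p = -\<alpha>"

lemma reset_not_LC:
  assumes "reset p t"
  shows "\<not> LC t p"
proof -
  have pV: "p \<in> V" and pos: "1 \<le> r t p" and new: "r (Suc t) p = -\<alpha>"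
    using assms by (auto simp: reset_def)
  then have "r (Suc t) p \<noteq> r t p" using a1 by simp
  from move_ring[OF pV _ this] pos new a1 dom[OF pV, of t] phi_in_ring[of "r t p" K]
  show ?thesis by auto
qed

lemma ring_move:
  assumes "p \<in> V" "0 \<le> r t p" "\<not> reset p t"
  shows "normal_move K E (r t) (r (Suc t)) p"
  using move_ring[OF assms(1,2)] assms by (auto simp: reset_def normal_move_def)

text \<open>Climbing from a value \<open>\<le> 0\<close> to a positive value requires a normal step, at which
 the process is locally correct.\<close>

lemma rise_LC:
  assumes "p \<in> V" "a \<le> b" "r a p \<le> 0" "r b p \<ge> 1"
  shows "\<exists>c. a \<le> c \<and> c < b \<and> LC c p"
proof -
  obtain c where c: "a \<le> c" "c < b" "r c p < 1" "1 \<le> r (Suc c) p"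
    using discrete_crossing[of a b "\<lambda>t. r t p" 1] assms by auto
  then have "r (Suc c) p \<noteq> r c p" by simp
  then have "NormalStepI K E (r c) p" using move_up[OF assms(1) c(4)] by blast
  then have "LC c p" by (rule NormalStepI_LocallyCorrect)
  then show ?thesis using c(1,2) by blast
qed

lemma LC_step:
  assumes pV: "p \<in> V" and lc: "LC t p" and no_reset: "\<And>q. E p q \<Longrightarrow> \<not> reset q t"
  shows "LC (Suc t) p"
proof (rule LocallyCorrect_normal_move[OF k3 lc])
  show "E q p" if "E p q" for q using graph_edge[OF G that] by simp
  show "normal_move K E (r t) (r (Suc t)) q" if "q = p \<or> E p q" for q
  proof -
    have "q \<in> V" using that pV graph_edge[OF G, of p q] by blast
    moreover have "0 \<le> r t q" using that lc by (auto simp: LocallyCorrect_iff)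
    moreover have "\<not> reset q t" using that no_reset reset_not_LC lc by auto
    ultimately show ?thesis by (rule ring_move)
  qed
qed

lemma LC_interval:
  assumes pV: "p \<in> V" and lc: "LC e p" and "e \<le> C"
    and no_reset: "\<And>c q. e \<le> c \<Longrightarrow> c < C \<Longrightarrow> E p q \<Longrightarrow> \<not> reset q c"
  shows "LC C p"
  using assms(3,4)
proof (induction C rule: dec_induct)
  case (step C)
  then show ?case using LC_step[OF pV] by simp
qed (use lc in simp)

lemma frozen_interval:
  assumes pq: "E p q" "r c0 p \<ge> 1" "r c0 q < 0" and "c0 \<le> c1"
    and no_reset: "\<And>c. c0 \<le> c \<Longrightarrow> c < c1 \<Longrightarrow> \<not> reset p c"
  shows "r c1 p = r c0 p \<and> r c1 q = r c0 q"
  using assms(4,5)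
proof (induction c1 rule: dec_induct)
  case (step c)
  have "p \<in> V" using graph_edge[OF G pq(1)] by simp
  then show ?case
    using frozen_pair[OF pq(1), of c] step pq a1 unfolding reset_def by force
qed simp

definition cause :: "'v \<times> nat \<Rightarrow> 'v \<times> nat \<Rightarrow> bool" where
  "cause y x \<longleftrightarrow> E (fst x) (fst y) \<and> reset (fst y) (snd y) \<and> reset (fst x) (snd x) \<and> snd y < snd x
     \<and> (\<forall>c. snd y < c \<and> c \<le> snd x \<longrightarrow> r c (fst x) = r (snd x) (fst x))"

definition root :: "'v \<times> nat \<Rightarrow> bool" where
  "root x \<longleftrightarrow> reset (fst x) (snd x) \<and> \<not> (\<exists>e \<le> snd x. LC e (fst x))"

lemma cause_basic:
  assumes "cause y x"
  shows "E (fst x) (fst y)" "reset (fst y) (snd y)" "reset (fst x) (snd x)" "snd y < snd x"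
    "\<And>c. snd y < c \<Longrightarrow> c \<le> snd x \<Longrightarrow> r c (fst x) = r (snd x) (fst x)"
  using assms unfolding cause_def by blast+

lemma cause_hold:
  assumes cy: "cause y x" and "snd y < c" "c \<le> Suc (snd x)"
  shows "r c (fst y) = -\<alpha>"
  using assms(2,3)
proof (induction c)
  case (Suc c)
  show ?case
  proof (cases "c = snd y")
    case True then show ?thesis using cause_basic(2)[OF cy] by (simp add: reset_def)
  next
    case False
    then have c: "snd y < c" "c \<le> snd x" using Suc.prems by auto
    have ih: "r c (fst y) = -\<alpha>" using Suc.IH c by simp
    have "r c (fst x) \<ge> 1"
      using cause_basic(5)[OF cy c] cause_basic(3)[OF cy] by (simp add: reset_def)
    with frozen_pair[OF cause_basic(1)[OF cy]] ih a1 show ?thesis by force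
  qed
qed simp

text \<open>Every reset that is not a root has a cause: after the last time \<open>e\<close> at which \<open>p\<close> was
 locally correct, \<open>p\<close> stays positive (climbing back would make it locally correct), so
 some neighbour resets in between and thereby freezes \<open>p\<close> until its reset.\<close>

lemma cause_exists:
  assumes rp: "reset p tp" and not_root: "\<not> root (p, tp)"
  shows "\<exists>y. cause y (p, tp)"
proof -
  have pV: "p \<in> V" and tp1: "r tp p \<ge> 1" using rp by (auto simp: reset_def)
  define e where "e = (GREATEST e. e \<le> tp \<and> LC e p)"
  have ex: "\<exists>e. e \<le> tp \<and> LC e p" using not_root rp by (auto simp: root_def)
  have e: "e \<le> tp" "LC e p"
    using GreatestI_ex_nat[OF ex, of tp] by (auto simp: e_def)
  have after_e: "\<not> LC c p" if "e < c" "c \<le> tp" for c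
    using Greatest_le_nat[of "\<lambda>e. e \<le> tp \<and> LC e p" c tp] that by (auto simp: e_def)
  have etp: "e < tp" using e reset_not_LC[OF rp] by (cases "e = tp") auto
  have positive: "1 \<le> r x p" if x: "e < x" "x \<le> tp" for x
  proof (rule ccontr)
    assume "\<not> ?thesis"
    then have "r x p \<le> 0" by simp
    then obtain c where "x \<le> c" "c < tp" "LC c p" using rise_LC[OF pV x(2) _ tp1] by blast
    then show False using after_e x by simp
  qed
  have "\<exists>c q. e \<le> c \<and> c < tp \<and> E p q \<and> reset q c"
  proof (rule ccontr)
    assume "\<not> ?thesis"
    then have "LC tp p" using LC_interval[OF pV e(2) less_imp_le[OF etp]] by blast
    then show False using reset_not_LC[OF rp] by simp
  qed
  then obtain c q where c: "e \<le> c" "c < tp" "E p q" "reset q c" by blast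
  have pc1: "r (Suc c) p \<ge> 1" using positive c by simp
  have qc1: "r (Suc c) q < 0" using c(4) a1 by (simp add: reset_def)
  have frozen: "r x p = r (Suc c) p" if x: "Suc c \<le> x" "x \<le> tp" for x
  proof -
    have "\<not> reset p c'" if "Suc c \<le> c'" "c' < x" for c'
      using positive[of "Suc c'"] that x c(1) a1 by (simp add: reset_def)
    then show ?thesis using frozen_interval[OF c(3) pc1 qc1 x(1)] by blast
  qed
  have const: "r x p = r tp p" if "c < x" "x \<le> tp" for x
    using frozen[of x] frozen[of tp] that c(2) by simp
  have "cause (q, c) (p, tp)" unfolding cause_def fst_conv snd_conv using c rp const by blast
  then show ?thesis by blast
qed

lemma root_unique:
  assumes "root (p, t1)" "root (p, t2)"
  shows "t1 = t2"
proof -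
  have later_not_root: False if ra: "root (p, a)" and rb: "root (p, b)" and ab: "a < b" for a b
  proof -
    have "p \<in> V" "r (Suc a) p \<le> 0" "r b p \<ge> 1" using ra rb a1 by (auto simp: root_def reset_def)
    then obtain c where "c < b" "LC c p" using rise_LC[of p "Suc a" b] ab by force
    then show False using rb by (auto simp: root_def)
  qed
  show ?thesis using later_not_root[OF assms] later_not_root[OF assms(2,1)] by (meson linorder_neqE_nat)
qed

lemma cause_unique:
  assumes "cause y (p, t1)" "cause y (p, t2)"
  shows "t1 = t2"
proof -
  have later_not_caused: False if c1: "cause y (p, a)" and c2: "cause y (p, b)" and "a < b" for a b
  proof -
    have "r (Suc a) p = r b p" using cause_basic(4)[OF c1] cause_basic(5)[OF c2, of "Suc a"] that(3) by simp
    moreover have "r (Suc a) p = -\<alpha>" "r b p \<ge> 1"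
      using cause_basic(3)[OF c1] cause_basic(3)[OF c2] by (auto simp: reset_def)
    ultimately show False using a1 by simp
  qed
  show ?thesis
    using later_not_caused[OF assms] later_not_caused[OF assms(2,1)] by (meson linorder_neqE_nat)
qed

end


section \<open>Cause chains do not close\<close>

context layer
begin

text \<open>A chain of length \<open>j\<close>: \<open>c (Suc k)\<close> causes \<open>c k\<close> for every \<open>k < j\<close>; it runs backwards in
 time.\<close>

definition chain :: "(nat \<Rightarrow> 'v \<times> nat) \<Rightarrow> nat \<Rightarrow> bool" where
  "chain c j \<longleftrightarrow> (\<forall>k<j. cause (c (Suc k)) (c k))"

lemma chain_cause: "chain c j \<Longrightarrow> k < j \<Longrightarrow> cause (c (Suc k)) (c k)"
  by (simp add: chain_def)

lemma chain_lt:
  assumes ch: "chain c j" and "k < l" "l \<le> j"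
  shows "snd (c l) < snd (c k)"
  using assms(2,3)
proof (induction l rule: less_induct)
  case (less l)
  then obtain l' where l: "l = Suc l'" "k \<le> l'" by (metis less_eq_Suc_le Suc_le_D Suc_le_mono)
  have "snd (c l) < snd (c l')" using cause_basic(4)[OF chain_cause[OF ch]] l less.prems by simp
  moreover have "snd (c l') \<le> snd (c k)" using less.IH[of l'] l less.prems by (cases "k = l'") auto
  ultimately show ?case by simp
qed

lemma chain_reset:
  assumes ch: "chain c j" and "k \<le> j" "1 \<le> j"
  shows "reset (fst (c k)) (snd (c k))"
proof (cases "k < j")
  case True then show ?thesis using cause_basic(3)[OF chain_cause[OF ch True]] by simp
next
  case False
  then have "k = Suc (j - 1)" using assms by simp
  then show ?thesis using cause_basic(2)[OF chain_cause[OF ch, of "j - 1"]] assms by simp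
qed

lemma chain_sub:
  assumes "chain c j" "a \<le> b" "b \<le> j"
  shows "chain (\<lambda>k. c (a + k)) (b - a)"
  using assms by (simp add: chain_def)

text \<open>If the causing neighbour \<open>fst y\<close> has climbed from \<open>-\<alpha>\<close> to at least
 \<open>w \<le> 0\<close> by time \<open>\<tau>\<close>, then the caused process already had value \<open>\<ge> w - 1\<close> at a time strictly
 between its reset and \<open>\<tau>\<close>: the neighbour's convergence step to \<open>w\<close> needed that.\<close>

lemma climb_back:
  assumes cy: "cause y x" and t: "snd y < \<tau>" and w: "w \<le> r \<tau> (fst y)" "-\<alpha> < w" "w \<le> 0"
  shows "\<exists>\<tau>'. snd x < \<tau>' \<and> \<tau>' < \<tau> \<and> w - 1 \<le> r \<tau>' (fst x)"
proof -
  have yV: "fst y \<in> V" and Eyx: "E (fst y) (fst x)" using graph_edge[OF G cause_basic(1)[OF cy]] by auto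
  have "r (Suc (snd y)) (fst y) = -\<alpha>" using cause_basic(2)[OF cy] by (simp add: reset_def)
  then obtain c where c: "Suc (snd y) \<le> c" "c < \<tau>" "r c (fst y) < w" "w \<le> r (Suc c) (fst y)"
    using discrete_crossing[of "Suc (snd y)" \<tau> "\<lambda>t. r t (fst y)" w] t w by auto
  then have "r (Suc c) (fst y) \<noteq> r c (fst y)" by simp
  from move_neg[OF yV _ this] c w
  have cs: "ConvergenceStep \<alpha> E (r c) (fst y)" and "r c (fst y) = w - 1" by auto
  moreover have "r c (fst y) \<le> r c (fst x)" using cs Eyx by (simp add: ConvergenceStep_def)
  ultimately have val: "w - 1 \<le> r c (fst x)" by simp
  have "snd x < c"
  proof (rule ccontr)
    assume "\<not> snd x < c"
    then have "r (Suc c) (fst y) = -\<alpha>" using cause_hold[OF cy, of "Suc c"] c by simp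
    then show False using c w by simp
  qed
  then show ?thesis using c val by blast
qed

lemma climb_chain:
  assumes ch: "chain c j" and lm: "l < m" "m \<le> j" and ma: "int (m - l) \<le> \<alpha>"
    and t0: "snd (c m) < \<tau>0" and v0: "0 \<le> r \<tau>0 (fst (c m))"
  shows "snd (c l) < \<tau>0"
proof -
  have climb: "\<exists>\<tau>. snd (c (m - i)) < \<tau> \<and> \<tau> \<le> \<tau>0 \<and> - int i \<le> r \<tau> (fst (c (m - i)))"
    if "i \<le> m - l" for i
    using that
  proof (induction i)
    case 0
    show ?case using t0 v0 by (intro exI[of _ \<tau>0]) auto
  next
    case (Suc i)
    then obtain \<tau> where tau: "snd (c (m - i)) < \<tau>" "\<tau> \<le> \<tau>0" "- int i \<le> r \<tau> (fst (c (m - i)))"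
      by auto
    define k where "k = m - Suc i"
    have mi: "m - i = Suc k" using Suc.prems lm by (simp add: k_def)
    have ck: "cause (c (Suc k)) (c k)" using chain_cause[OF ch, of k] Suc.prems lm by (simp add: k_def)
    have "- \<alpha> < - int i" using Suc.prems ma by simp
    from climb_back[OF ck, of \<tau> "- int i"] tau mi this
    obtain \<tau>' where "snd (c k) < \<tau>'" "\<tau>' < \<tau>" "- int i - 1 \<le> r \<tau>' (fst (c k))" by auto
    then show ?case using tau by (intro exI[of _ \<tau>']) (auto simp: k_def)
  qed
  from climb[of "m - l"] lm show ?thesis by auto
qed

text \<open>Hence a chain of length at most \<open>\<alpha>\<close> cannot return to its starting process: that process is
 positive at the time of the chain's first reset.\<close>

lemma short_chain_not_closed:
  assumes ch: "chain c j" and j1: "1 \<le> j" and ja: "int j \<le> \<alpha>"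
  shows "fst (c 0) \<noteq> fst (c j)"
proof
  assume closed: "fst (c 0) = fst (c j)"
  have "0 \<le> r (snd (c 0)) (fst (c j))"
    using chain_reset[OF ch, of 0] j1 closed by (simp add: reset_def)
  moreover have "snd (c j) < snd (c 0)" using chain_lt[OF ch, of 0 j] j1 by simp
  ultimately have "snd (c 0) < snd (c 0)" using climb_chain[OF ch, of 0 j "snd (c 0)"] j1 ja by simp
  then show False by simp
qed

text \<open>A chord of a chain spanning at most \<open>\<alpha> + 1\<close> steps is itself a cause: if \<open>fst (c a)\<close> had
 changed after the reset of \<open>c b\<close>, its last change would be a normal step with \<open>fst (c b)\<close> in the
 ring, which by \<open>climb_chain\<close> happens after the reset \<open>c (Suc a)\<close> -- contradicting that this
 reset causes \<open>c a\<close>.\<close>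

lemma chord_cause:
  assumes ch: "chain c j" and ab: "Suc a < b" "b \<le> j" and Eab: "E (fst (c a)) (fst (c b))"
    and span: "int (b - Suc a) \<le> \<alpha>"
  shows "cause (c b) (c a)"
proof -
  let ?p = "fst (c a)" and ?ta = "snd (c a)"
  have j1: "1 \<le> j" using ab by simp
  have ca: "cause (c (Suc a)) (c a)" using chain_cause[OF ch, of a] ab by simp
  have const: "r x ?p = r ?ta ?p" if x: "snd (c b) < x" "x \<le> ?ta" for x
  proof (rule ccontr)
    assume "r x ?p \<noteq> r ?ta ?p"
    then obtain x0 where x0: "x \<le> x0" "x0 < ?ta" "r x0 ?p \<noteq> r ?ta ?p" "r (Suc x0) ?p = r ?ta ?p"
      using last_change[of x ?ta "\<lambda>t. r t ?p"] x(2) by blast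
    have pV: "?p \<in> V" using graph_edge[OF G Eab] by simp
    have "r (Suc x0) ?p \<ge> 1" using x0(4) cause_basic(3)[OF ca] by (simp add: reset_def)
    with move_up[OF pV this] x0 have ns: "NormalStepI K E (r x0) ?p" by simp
    then have "0 \<le> r x0 (fst (c b))"
      using Eab phi_in_ring[of "r x0 ?p" K] by (auto simp: NormalStepI_def ring_iff)
    then have "snd (c (Suc a)) < x0" using climb_chain[OF ch ab(1,2), of x0] span x x0(1) by simp
    then show False using cause_basic(5)[OF ca, of x0] x0 by simp
  qed
  have "reset (fst (c b)) (snd (c b))" "reset ?p ?ta" using chain_reset[OF ch] ab j1 by auto
  moreover have "snd (c b) < ?ta" using chain_lt[OF ch, of a b] ab by simp
  ultimately show ?thesis unfolding cause_def using Eab const by blast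
qed

lemma chain_shortcut:
  assumes ch: "chain c j" and ab: "a < b" "b \<le> j" and cab: "cause (c b) (c a)"
  shows "chain (\<lambda>k. if k \<le> a then c k else c (k + (b - Suc a))) (j - (b - Suc a))"
  unfolding chain_def
proof (intro allI impI)
  fix k assume k: "k < j - (b - Suc a)"
  consider "k < a" | "k = a" | "a < k" by linarith
  then show "cause (if Suc k \<le> a then c (Suc k) else c (Suc k + (b - Suc a)))
                   (if k \<le> a then c k else c (k + (b - Suc a)))"
  proof cases
    case 1 then show ?thesis using chain_cause[OF ch, of k] ab by simp
  next
    case 2 then show ?thesis using cab ab by simp
  next
    case 3 then show ?thesis using chain_cause[OF ch, of "k + (b - Suc a)"] k ab by simp
  qed
qed

text \<open>A returning chain of length \<open>\<ge> 3\<close> whose processes are distinct (apart from the return)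
 is a cycle of the graph.  By \<open>short_chord\<close> it has a chord, or closing edge, spanning fewer than
 \<open>T_G \<le> \<alpha>\<close> steps; by \<open>chord_cause\<close> this chord is a cause, which shortcuts the chain to a
 shorter returning chain.\<close>

lemma closed_chain_shortcut:
  assumes aT: "int (T_G E) \<le> \<alpha>" and ch: "chain c j" and j3: "3 \<le> j"
    and closed: "fst (c 0) = fst (c j)" and distinct: "inj_on (\<lambda>k. fst (c k)) {0..j - 1}"
  shows "\<exists>c' j'. chain c' j' \<and> 1 \<le> j' \<and> j' < j \<and> fst (c' 0) = fst (c' j')"
proof -
  define f where "f k = fst (c k)" for k
  have path: "E (f k) (f (Suc k))" if "k < j" for k
    using cause_basic(1)[OF chain_cause[OF ch that]] by (simp add: f_def)
  have "E (f (j - 1)) (f 0)" using path[of "j - 1"] closed j3 by (simp add: f_def)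
  then have closing: "E (f 0) (f (j - 1))" using graph_edge[OF G] by blast
  have "0 + 2 \<le> j - 1" using j3 by simp
  from short_chord[OF G distinct[folded f_def] _ this closing] path
  obtain x y where xy: "x + 2 \<le> y" "y \<le> j - 1" "E (f x) (f y)" "y - x < T_G E" by auto
  define c' where "c' = (\<lambda>k. if k \<le> x then c k else c (k + (y - Suc x)))"
  define j' where "j' = j - (y - Suc x)"
  have "cause (c y) (c x)" using chord_cause[OF ch, of x y] xy aT by (simp add: f_def)
  then have "chain c' j'" using chain_shortcut[OF ch, of x y] xy by (simp add: c'_def j'_def)
  moreover have "1 \<le> j'" "j' < j" "fst (c' 0) = fst (c' j')"
    using xy closed by (auto simp: c'_def j'_def)
  ultimately show ?thesis by blast
qed

text \<open>A
 shortest returning chain has distinct processes and is therefore shortcut; chains of length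
 \<open>\<le> 2\<close> are too short to return.\<close>

lemma chain_not_closed:
  assumes aT: "int (T_G E) \<le> \<alpha>"
  shows "chain c j \<Longrightarrow> 1 \<le> j \<Longrightarrow> fst (c 0) \<noteq> fst (c j)"
proof (induction j arbitrary: c rule: less_induct)
  case (less j c)
  have ch: "chain c j" and j1: "1 \<le> j" using less.prems by auto
  show ?case
  proof (cases "j \<le> 2")
    case True
    then show ?thesis using short_chain_not_closed[OF ch j1] aT T_G_ge_2[OF G] by simp
  next
    case False
    have "inj_on (\<lambda>k. fst (c k)) {0..j - 1}"
    proof (rule linorder_inj_onI')
      fix a b assume "a \<in> {0..j - 1}" "b \<in> {0..j - 1}" "a < b"
      then show "fst (c a) \<noteq> fst (c b)"
        using less.IH[of "b - a" "\<lambda>k. c (a + k)"] chain_sub[OF ch, of a b] by simp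
    qed
    moreover have "3 \<le> j" using False by simp
    ultimately show ?thesis using closed_chain_shortcut[OF aT ch] less.IH by blast
  qed
qed

end


section \<open>Finitely many resets\<close>

context layer
begin

inductive level :: "nat \<Rightarrow> 'v \<times> nat \<Rightarrow> bool" where
  level_root: "root x \<Longrightarrow> level 0 x"
| level_cause: "level d y \<Longrightarrow> cause y x \<Longrightarrow> level (Suc d) x"

lemma reset_level: "reset p t \<Longrightarrow> \<exists>d. level d (p, t)"
proof (induction t arbitrary: p rule: less_induct)
  case (less t p)
  show ?case
  proof (cases "root (p, t)")
    case True then show ?thesis using level_root by blast
  next
    case False
    from cause_exists[OF less.prems False] obtain y where cy: "cause y (p, t)" by blast
    have "snd y < t" "reset (fst y) (snd y)" using cause_basic[OF cy] by auto
    then obtain d where "level d (fst y, snd y)" using less.IH by blast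
    then show ?thesis using level_cause cy by fastforce
  qed
qed

lemma level_chain: "level d x \<Longrightarrow> \<exists>c. c 0 = x \<and> chain c d \<and> reset (fst x) (snd x)"
proof (induction rule: level.induct)
  case (level_root x)
  then show ?case by (intro exI[of _ "\<lambda>_. x"]) (auto simp: chain_def root_def)
next
  case (level_cause d y x)
  then obtain c where c: "c 0 = y" "chain c d" by blast
  define c' where "c' = (\<lambda>k. if k = 0 then x else c (k - 1))"
  have "chain c' (Suc d)"
    unfolding chain_def
  proof (intro allI impI)
    fix k assume k: "k < Suc d"
    show "cause (c' (Suc k)) (c' k)"
      using level_cause.hyps(2) c chain_cause[OF c(2), of "k - 1"] k by (cases k) (auto simp: c'_def)
  qed
  then show ?case using cause_basic(3)[OF level_cause.hyps(2)] by (intro exI[of _ c']) (simp add: c'_def)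
qed

text \<open>Since chains do not revisit processes, levels are below \<open>|V|\<close>.\<close>

lemma level_bound:
  assumes aT: "int (T_G E) \<le> \<alpha>" and l: "level d x"
  shows "d < card V"
proof -
  obtain c where c: "c 0 = x" "chain c d" "reset (fst x) (snd x)" using level_chain[OF l] by blast
  have inV: "fst (c k) \<in> V" if "k \<le> d" for k
    using chain_reset[OF c(2) that] c(1,3) that by (cases "d = 0") (auto simp: reset_def)
  have "inj_on (\<lambda>k. fst (c k)) {0..d}"
  proof (rule linorder_inj_onI')
    fix a b assume "a \<in> {0..d}" "b \<in> {0..d}" "a < b"
    then show "fst (c a) \<noteq> fst (c b)"
      using chain_not_closed[OF aT chain_sub[OF c(2), of a b]] by simp
  qed
  moreover have "(\<lambda>k. fst (c k)) ` {0..d} \<subseteq> V" using inV by auto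
  moreover have "finite V" using G by (simp add: graph_def)
  ultimately have "card {0..d} \<le> card V" by (rule card_inj_on_le)
  then show ?thesis by simp
qed

text \<open>There are finitely many resets of each level: roots are unique per process, and a reset
 causes at most one reset per process.\<close>

lemma level_finite: "finite {x. level d x}"
proof (induction d)
  case 0
  have "{x. level 0 x} = {x. root x}" by (auto intro: level_root elim: level.cases)
  moreover have "finite {x. root x}"
  proof (rule finite_imageD[of fst])
    have "fst ` {x. root x} \<subseteq> V" by (auto simp: root_def reset_def)
    then show "finite (fst ` {x. root x})" using G by (auto simp: graph_def intro: finite_subset)
    show "inj_on fst {x. root x}"
      using root_unique by (intro inj_onI) (metis mem_Collect_eq prod.collapse)
  qed
  ultimately show ?case by simp
next
  case (Suc d)
  have "{x. level (Suc d) x} \<subseteq> (\<Union>y\<in>{y. level d y}. {x. cause y x})"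
    by (auto elim: level.cases)
  moreover have "finite {x. cause y x}" for y
  proof (rule finite_imageD[of fst])
    have "fst ` {x. cause y x} \<subseteq> V" by (auto simp: cause_def reset_def)
    then show "finite (fst ` {x. cause y x})" using G by (auto simp: graph_def intro: finite_subset)
    show "inj_on fst {x. cause y x}"
      using cause_unique by (intro inj_onI) (metis mem_Collect_eq prod.collapse)
  qed
  ultimately show ?case using Suc.IH by (meson finite_UN_I finite_subset)
qed

lemma resets_stop:
  assumes aT: "int (T_G E) \<le> \<alpha>"
  shows "\<exists>T. \<forall>t\<ge>T. \<forall>p. \<not> reset p t"
proof -
  have "{x. reset (fst x) (snd x)} \<subseteq> (\<Union>d<card V. {x. level d x})"
    using reset_level level_bound[OF aT] by fastforce
  then have "finite {x. reset (fst x) (snd x)}"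
    using level_finite by (meson finite_UN_I finite_lessThan finite_subset)
  then have "finite (snd ` {x. reset (fst x) (snd x)})" by simp
  then obtain T where "\<forall>t\<in>snd ` {x. reset (fst x) (snd x)}. t < T"
    unfolding finite_nat_set_iff_bounded by blast
  then have "\<forall>t\<ge>T. \<forall>p. \<not> reset p t" by fastforce
  then show ?thesis by blast
qed

text \<open>Once resets have stopped, tail values only increase, so convergence steps stop as well:
 eventually every process makes only normal moves.\<close>

lemma eventually_normal:
  assumes aT: "int (T_G E) \<le> \<alpha>"
  shows "\<exists>T. \<forall>t\<ge>T. \<forall>p\<in>V. normal_move K E (r t) (r (Suc t)) p"
proof -
  obtain T0 where T0: "\<And>t p. T0 \<le> t \<Longrightarrow> \<not> reset p t" using resets_stop[OF aT] by blast
  have "eventually (\<lambda>t. normal_move K E (r t) (r (Suc t)) p) sequentially" if pV: "p \<in> V" for p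
  proof -
    let ?m = "\<lambda>t. min (r t p) 0"
    have mono: "?m t \<le> ?m (Suc t)" if "T0 \<le> t" for t
    proof (cases "r t p < 0")
      case True
      then show ?thesis using move_neg[OF pV True] by (cases "r (Suc t) p = r t p") auto
    next
      case False
      then show ?thesis
        using ring_move[OF pV _ T0[OF that]] phi_in_ring[of "r t p" K] dom[OF pV, of t]
        by (auto simp: normal_move_def)
    qed
    obtain T1 where T1: "\<And>t. T1 \<le> t \<Longrightarrow> ?m (Suc t) = ?m t"
      using mono_bounded_eventually_const[of T0 ?m 0] mono by auto
    have "normal_move K E (r t) (r (Suc t)) p" if "max T0 T1 \<le> t" for t
    proof (cases "r t p < 0")
      case True
      then have "r (Suc t) p = r t p" using move_neg[OF pV True] T1[of t] that by fastforce
      then show ?thesis by (simp add: normal_move_def)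
    qed (use ring_move[OF pV] T0 that in auto)
    then show ?thesis unfolding eventually_sequentially by blast
  qed
  then have "eventually (\<lambda>t. \<forall>p\<in>V. normal_move K E (r t) (r (Suc t)) p) sequentially"
    using G by (intro eventually_ball_finite) (auto simp: graph_def)
  then show ?thesis unfolding eventually_sequentially by blast
qed

end


section \<open>Runs of normal moves\<close>

text \<open>If all processes move normally, a process that is not locally correct keeps its value
 (a normal step would make it locally correct) and stays incorrect: a neighbour witnessing the
 defect could only move by a normal step, which requires adjacency.\<close>

lemma not_LocallyCorrect_normal_moves:
  assumes G: "graph V E" and mv: "\<forall>q\<in>V. normal_move K E r r' q"
    and pV: "p \<in> V" and nlc: "\<not> LocallyCorrect K E r p"
  shows "\<not> LocallyCorrect K E r' p \<and> r' p = r p"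
proof -
  have still: "r' q = r q" if "q \<in> V" "\<not> LocallyCorrect K E r q" for q
  proof -
    have "\<not> NormalStepI K E r q" using that(2) NormalStepI_LocallyCorrect by metis
    then show ?thesis using mv that(1) by (auto simp: normal_move_def)
  qed
  have p_still: "r' p = r p" using still[OF pV nlc] .
  have "\<not> LocallyCorrect K E r' p"
  proof (cases "0 \<le> r p \<and> r p \<le> K - 1")
    case False
    then show ?thesis using p_still by (auto simp: LocallyCorrect_iff)
  next
    case True
    then obtain q where q: "E p q" "\<not> (0 \<le> r q \<and> r q \<le> K - 1 \<and> adjacent K (r p) (r q))"
      using nlc unfolding LocallyCorrect_iff by blast
    have qV: "q \<in> V" and Eqp: "E q p" using graph_edge[OF G q(1)] by auto
    have "r' q = r q"
    proof (rule ccontr)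
      assume "r' q \<noteq> r q"
      then have "NormalStepI K E r q" using mv qV by (auto simp: normal_move_def)
      then have "0 \<le> r q \<and> r q \<le> K - 1" "r p = r q \<or> r p = phi K (r q)"
        using Eqp by (auto simp: NormalStepI_def ring_iff)
      then show False using q(2) by (auto simp: adjacent_def)
    qed
    then show ?thesis using q p_still unfolding LocallyCorrect_iff by auto
  qed
  then show ?thesis using p_still by simp
qed

locale normal_run =
  fixes V :: "'v set" and E :: "'v \<Rightarrow> 'v \<Rightarrow> bool" and K :: int
    and r :: "nat \<Rightarrow> 'v \<Rightarrow> int" and T :: nat
  assumes G: "graph V E" and k3: "K \<ge> 3"
    and normal: "\<And>t p. T \<le> t \<Longrightarrow> p \<in> V \<Longrightarrow> normal_move K E (r t) (r (Suc t)) p"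
begin

lemma not_LC_persists:
  assumes pV: "p \<in> V" and nlc: "\<not> LocallyCorrect K E (r t0) p" and "T \<le> t0" "t0 \<le> t"
  shows "\<not> LocallyCorrect K E (r t) p \<and> r t p = r t0 p"
  using assms(4)
proof (induction t rule: dec_induct)
  case (step n)
  have "\<forall>q\<in>V. normal_move K E (r n) (r (Suc n)) q" using normal step.hyps(1) \<open>T \<le> t0\<close> by simp
  from not_LocallyCorrect_normal_moves[OF G this pV] show ?case using step.IH by simp
qed (use nlc in simp)

text \<open>A neighbour of a process frozen at value \<open>v\<close> moves at most twice: from \<open>v - 1\<close> to \<open>v\<close>
 and from \<open>v\<close> to \<open>v + 1\<close>, after which the guard of a normal step can no longer hold.\<close>

lemma freeze_neighbour:
  assumes Epq: "E p q" and Tt: "T \<le> t0" and p_frozen: "\<And>t. t0 \<le> t \<Longrightarrow> r t p = r t0 p"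
  shows "\<exists>t1. \<forall>t\<ge>t1. r (Suc t) q = r t q"
proof -
  have qV: "q \<in> V" and Eqp: "E q p" using graph_edge[OF G Epq] by auto
  define v where "v = r t0 p"
  define m :: "nat \<Rightarrow> int"
    where "m t = (if phi K (r t q) = v \<and> r t q \<noteq> v then 2 else if r t q = v then 1 else 0)" for t
  have dec: "m (Suc t) < m t" if t: "t0 \<le> t" "r (Suc t) q \<noteq> r t q" for t
  proof -
    have ns: "NormalStepI K E (r t) q" and nx: "r (Suc t) q = phi K (r t q)"
      using normal[OF _ qV, of t] t Tt by (auto simp: normal_move_def)
    have qr: "0 \<le> r t q" "r t q \<le> K - 1" using ns by (auto simp: NormalStepI_def ring_iff)
    have "v = r t q \<or> v = phi K (r t q)"
      using ns Eqp p_frozen[OF t(1)] by (auto simp: NormalStepI_def v_def)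
    then show ?thesis
      using nx phi_ne[OF qr k3] phi_phi_ne[OF qr k3] by (auto simp: m_def)
  qed
  have mono: "- m t \<le> - m (Suc t)" if "t0 \<le> t" for t
    using dec[OF that] by (cases "r (Suc t) q = r t q") (auto simp: m_def)
  have bounded: "- m t \<le> 0" for t by (simp add: m_def)
  obtain T' where T': "\<And>t. T' \<le> t \<Longrightarrow> - m (Suc t) = - m t"
    using mono_bounded_eventually_const[of t0 "\<lambda>t. - m t" 0] mono bounded by blast
  have "r (Suc t) q = r t q" if "max T' t0 \<le> t" for t
  proof (rule ccontr)
    assume "r (Suc t) q \<noteq> r t q"
    then have "m (Suc t) < m t" using dec that by simp
    then show False using T'[of t] that by simp
  qed
  then show ?thesis by blast
qed

lemma freeze_all:
  assumes conn: "\<And>u v. u \<in> V \<Longrightarrow> v \<in> V \<Longrightarrow> (u, v) \<in> {(x, y). E x y}\<^sup>*"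
    and p0: "p0 \<in> V" and frozen0: "\<And>t. t0 \<le> t \<Longrightarrow> r (Suc t) p0 = r t p0"
  shows "\<exists>t1. \<forall>t\<ge>t1. \<forall>q\<in>V. r (Suc t) q = r t q"
proof -
  have "eventually (\<lambda>t. r (Suc t) q = r t q) sequentially" if qV: "q \<in> V" for q
  proof -
    have "(p0, q) \<in> {(x, y). E x y}\<^sup>*" using conn[OF p0 qV] .
    then show ?thesis
    proof (induction rule: rtrancl_induct)
      case base then show ?case using frozen0 unfolding eventually_sequentially by blast
    next
      case (step y z)
      then obtain t1 where t1: "\<And>t. t1 \<le> t \<Longrightarrow> r (Suc t) y = r t y"
        unfolding eventually_sequentially by blast
      have y_frozen: "r t y = r (max t1 T) y" if "max t1 T \<le> t" for t
        using that
      proof (induction t rule: dec_induct)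
        case (step n)
        then show ?case using t1[of n] by simp
      qed simp
      have "E y z" using step(2) by simp
      from freeze_neighbour[OF this _ y_frozen] show ?case
        unfolding eventually_sequentially by simp
    qed
  qed
  then have "eventually (\<lambda>t. \<forall>q\<in>V. r (Suc t) q = r t q) sequentially"
    using G by (intro eventually_ball_finite) (auto simp: graph_def)
  then show ?thesis unfolding eventually_sequentially by blast
qed

end


lemma ssdc_step_at:
  assumes "ssdc_step V E \<alpha>1 K1 \<alpha>2 K2 \<rho> cond cond1 Init Comp \<gamma> \<gamma>'"
  shows "\<gamma>' p = \<gamma> p \<or>
    (\<exists>a. enabled E \<alpha>1 K1 \<alpha>2 K2 a p \<gamma> \<and> \<gamma>' p = exec E \<alpha>1 K1 \<alpha>2 K2 \<rho> cond cond1 Init Comp a p \<gamma>)"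
  using assms unfolding ssdc_step_def by metis

lemma ssdc_step_active:
  assumes "ssdc_step V E \<alpha>1 K1 \<alpha>2 K2 \<rho> cond cond1 Init Comp \<gamma> \<gamma>'"
  shows "\<exists>p\<in>V. \<exists>a. enabled E \<alpha>1 K1 \<alpha>2 K2 a p \<gamma> \<and>
    \<gamma>' p = exec E \<alpha>1 K1 \<alpha>2 K2 \<rho> cond cond1 Init Comp a p \<gamma>"
  using assms unfolding ssdc_step_def by (metis all_not_in_conv subsetD)

lemma step_R1:
  assumes st: "ssdc_step V E \<alpha>1 K1 \<alpha>2 K2 \<rho> cond cond1 Init Comp \<gamma> \<gamma>'"
  shows "R1 \<gamma>' p = R1 \<gamma> p
    \<or> (NormalStepI K1 E (R1 \<gamma>) p \<and> LocallyCorrect K2 E (R2 \<gamma>) p \<and> R1 \<gamma>' p = phi K1 (R1 \<gamma> p))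
    \<or> (ConvergenceStep \<alpha>1 E (R1 \<gamma>) p \<and> R1 \<gamma>' p = R1 \<gamma> p + 1)
    \<or> (ResetInit \<alpha>1 K1 E (R1 \<gamma>) p \<and> R1 \<gamma>' p = -\<alpha>1)"
  using ssdc_step_at[OF st, of p]
proof (elim disjE exE conjE)
  fix a assume en: "enabled E \<alpha>1 K1 \<alpha>2 K2 a p \<gamma>"
    and ex: "\<gamma>' p = exec E \<alpha>1 K1 \<alpha>2 K2 \<rho> cond cond1 Init Comp a p \<gamma>"
  show ?thesis
  proof (cases a)
    case CA1
    then have "R1 \<gamma> p < 0" using en by (auto simp: enabled_def ConvergenceStep_def tailS_iff)
    then show ?thesis using en ex CA1 phi_neg[of "R1 \<gamma> p" K1] by (auto simp: enabled_def exec_def R1_def)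
  qed (use en ex in \<open>auto simp: enabled_def exec_def R1_def\<close>)
qed (simp add: R1_def)

lemma step_R2:
  assumes st: "ssdc_step V E \<alpha>1 K1 \<alpha>2 K2 \<rho> cond cond1 Init Comp \<gamma> \<gamma>'"
  shows "layer_move \<alpha>2 K2 E (R2 \<gamma>) (R2 \<gamma>') p"
  using ssdc_step_at[OF st, of p]
proof (elim disjE exE conjE)
  fix a assume en: "enabled E \<alpha>1 K1 \<alpha>2 K2 a p \<gamma>"
    and ex: "\<gamma>' p = exec E \<alpha>1 K1 \<alpha>2 K2 \<rho> cond cond1 Init Comp a p \<gamma>"
  show ?thesis
  proof (cases a)
    case CA2
    then have "R2 \<gamma> p < 0" using en by (auto simp: enabled_def ConvergenceStep_def tailS_iff)
    then show ?thesis using en ex CA2 phi_neg[of "R2 \<gamma> p" K2]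
      by (auto simp: enabled_def exec_def R2_def layer_move_def)
  qed (use en ex in \<open>auto simp: enabled_def exec_def R2_def layer_move_def normal_move_def\<close>)
qed (simp add: R2_def layer_move_def normal_move_def)

lemma step_R1_layer_move:
  "ssdc_step V E \<alpha>1 K1 \<alpha>2 K2 \<rho> cond cond1 Init Comp \<gamma> \<gamma>' \<Longrightarrow> layer_move \<alpha>1 K1 E (R1 \<gamma>) (R1 \<gamma>') p"
  using step_R1[of V E \<alpha>1 K1 \<alpha>2 K2 \<rho> cond cond1 Init Comp \<gamma> \<gamma>' p]
  unfolding layer_move_def normal_move_def by blast

lemma step_progress:
  assumes st: "ssdc_step V E \<alpha>1 K1 \<alpha>2 K2 \<rho> cond cond1 Init Comp \<gamma> \<gamma>'"
    and k1: "K1 \<ge> 3" and a1: "\<alpha>1 \<ge> 1" and a2: "\<alpha>2 \<ge> 1"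
  shows "\<exists>p\<in>V. R1 \<gamma>' p \<noteq> R1 \<gamma> p \<or> \<not> normal_move K2 E (R2 \<gamma>) (R2 \<gamma>') p"
proof -
  obtain p a where pV: "p \<in> V" and en: "enabled E \<alpha>1 K1 \<alpha>2 K2 a p \<gamma>"
    and ex: "\<gamma>' p = exec E \<alpha>1 K1 \<alpha>2 K2 \<rho> cond cond1 Init Comp a p \<gamma>"
    using ssdc_step_active[OF st] by blast
  have "R1 \<gamma>' p \<noteq> R1 \<gamma> p \<or> \<not> normal_move K2 E (R2 \<gamma>) (R2 \<gamma>') p"
  proof (cases a)
    case NA
    then have "0 \<le> R1 \<gamma> p" "R1 \<gamma> p \<le> K1 - 1"
      using en by (auto simp: enabled_def NormalStepI_def ring_iff)
    moreover have "R1 \<gamma>' p = phi K1 (R1 \<gamma> p)" using ex NA by (simp add: exec_def R1_def)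
    ultimately show ?thesis using phi_ne k1 by simp
  next
    case CA1
    then show ?thesis using en ex phi_neg
      by (auto simp: enabled_def exec_def R1_def ConvergenceStep_def tailS_iff)
  next
    case RA1
    then show ?thesis using en ex a1 by (auto simp: enabled_def exec_def R1_def ResetInit_def tail_iff)
  next
    case CA2
    then show ?thesis using en ex phi_neg
      by (auto simp: enabled_def exec_def R2_def ConvergenceStep_def tailS_iff normal_move_def
          NormalStepI_def ring_iff)
  next
    case RA2
    have "R2 \<gamma> p \<notin> tail \<alpha>2" "R2 \<gamma>' p = -\<alpha>2"
      using en ex RA2 by (auto simp: enabled_def exec_def ResetInit_def R2_def)
    then show ?thesis
      using a2 phi_in_ring[of "R2 \<gamma> p" K2]
      by (auto simp: normal_move_def NormalStepI_def ring_iff tail_iff)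
  qed
  then show ?thesis using pV by blast
qed


section \<open>Closure of WU\<close>

text \<open>In WU all processes are locally correct in both layers, so both registers move
 normally, which preserves local correctness.\<close>

lemma WU_closed:
  assumes G: "graph V E" and k1: "K1 \<ge> 3" and k2: "K2 \<ge> 3"
    and wu: "WU V E K1 K2 \<gamma>" and st: "ssdc_step V E \<alpha>1 K1 \<alpha>2 K2 \<rho> cond cond1 Init Comp \<gamma> \<gamma>'"
  shows "WU V E K1 K2 \<gamma>'"
proof -
  have lc1: "\<forall>p\<in>V. LocallyCorrect K1 E (R1 \<gamma>) p" and lc2: "\<forall>p\<in>V. LocallyCorrect K2 E (R2 \<gamma>) p"
    using wu WU_i_iff_LocallyCorrect[OF k1 G] WU_i_iff_LocallyCorrect[OF k2 G] by (auto simp: WU_def)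
  have "\<forall>p\<in>V. normal_move K1 E (R1 \<gamma>) (R1 \<gamma>') p"
    using LocallyCorrect_layer_move[OF _ step_R1_layer_move[OF st]] lc1 by blast
  from LocallyCorrect_normal_moves[OF k1 G lc1 this]
  have "\<forall>p\<in>V. LocallyCorrect K1 E (R1 \<gamma>') p" .
  moreover have "\<forall>p\<in>V. normal_move K2 E (R2 \<gamma>) (R2 \<gamma>') p"
    using LocallyCorrect_layer_move[OF _ step_R2[OF st]] lc2 by blast
  from LocallyCorrect_normal_moves[OF k2 G lc2 this]
  have "\<forall>p\<in>V. LocallyCorrect K2 E (R2 \<gamma>') p" .
  ultimately show ?thesis
    using WU_i_iff_LocallyCorrect[OF k1 G] WU_i_iff_LocallyCorrect[OF k2 G] by (simp add: WU_def)
qed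


section \<open>Convergence to WU\<close>

definition registers_in_domain :: "'v set \<Rightarrow> int \<Rightarrow> int \<Rightarrow> int \<Rightarrow> int \<Rightarrow> ('v, 's) config \<Rightarrow> bool" where
  "registers_in_domain V \<alpha>1 K1 \<alpha>2 K2 \<gamma> \<longleftrightarrow> (\<forall>p\<in>V. R1 \<gamma> p \<in> chi \<alpha>1 K1 \<and> R2 \<gamma> p \<in> chi \<alpha>2 K2)"

lemma registers_in_domain_step:
  assumes a1: "\<alpha>1 \<ge> 1" and a2: "\<alpha>2 \<ge> 1" and k1: "K1 \<ge> 3" and k2: "K2 \<ge> 3"
    and d: "registers_in_domain V \<alpha>1 K1 \<alpha>2 K2 \<gamma>"
    and st: "ssdc_step V E \<alpha>1 K1 \<alpha>2 K2 \<rho> cond cond1 Init Comp \<gamma> \<gamma>'"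
  shows "registers_in_domain V \<alpha>1 K1 \<alpha>2 K2 \<gamma>'"
  using d layer_move_dom[OF a1 k1 _ _ step_R1_layer_move[OF st]]
    layer_move_dom[OF a2 k2 _ _ step_R2[OF st]]
  by (simp add: registers_in_domain_def chi_iff[OF a1 k1] chi_iff[OF a2 k2])

text \<open>A terminal configuration satisfies WU: no convergence step or reset is enabled.\<close>

lemma terminal_WU:
  assumes G: "graph V E" and a1: "\<alpha>1 \<ge> 1" and a2: "\<alpha>2 \<ge> 1" and k1: "K1 \<ge> 3" and k2: "K2 \<ge> 3"
    and d: "registers_in_domain V \<alpha>1 K1 \<alpha>2 K2 \<gamma>" and halted: "terminal V E \<alpha>1 K1 \<alpha>2 K2 \<gamma>"
  shows "WU V E K1 K2 \<gamma>"
proof -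
  have quiet: "\<not> enabled E \<alpha>1 K1 \<alpha>2 K2 a p \<gamma>" if "p \<in> V" for a p
    using halted that by (auto simp: terminal_def)
  have "\<forall>p\<in>V. LocallyCorrect K1 E (R1 \<gamma>) p"
    using quiet_layer_LocallyCorrect[OF G, of \<alpha>1 "R1 \<gamma>" K1] d quiet[of _ CA1] quiet[of _ RA1]
    by (simp add: registers_in_domain_def chi_iff[OF a1 k1] enabled_def)
  moreover have "\<forall>p\<in>V. LocallyCorrect K2 E (R2 \<gamma>) p"
    using quiet_layer_LocallyCorrect[OF G, of \<alpha>2 "R2 \<gamma>" K2] d quiet[of _ CA2] quiet[of _ RA2]
    by (simp add: registers_in_domain_def chi_iff[OF a2 k2] enabled_def)
  ultimately show ?thesis
    using WU_i_iff_LocallyCorrect[OF k1 G] WU_i_iff_LocallyCorrect[OF k2 G] by (simp add: WU_def)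
qed

text \<open>Once both layers make only normal moves, a configuration violating WU contains a process
 whose \<open>r_1\<close> is frozen forever: either it is not locally correct in layer 1, or it is not
 locally correct in layer 2 and hence can never execute \<open>NA\<close>.\<close>

lemma not_WU_frozen_process:
  assumes G: "graph V E" and k1: "K1 \<ge> 3" and k2: "K2 \<ge> 3" and a1: "\<alpha>1 \<ge> 1"
    and steps: "\<And>i. ssdc_step V E \<alpha>1 K1 \<alpha>2 K2 \<rho> cond cond1 Init Comp (e i) (e (Suc i))"
    and N1: "normal_run V E K1 (\<lambda>t. R1 (e t)) T" and N2: "normal_run V E K2 (\<lambda>t. R2 (e t)) T"
    and not_wu: "\<not> WU V E K1 K2 (e T)"
  shows "\<exists>p\<in>V. \<forall>t\<ge>T. R1 (e (Suc t)) p = R1 (e t) p"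
proof (cases "\<forall>p\<in>V. LocallyCorrect K1 E (R1 (e T)) p")
  case False
  then obtain p where pV: "p \<in> V" and nlc: "\<not> LocallyCorrect K1 E (R1 (e T)) p" by blast
  have "R1 (e t) p = R1 (e T) p" if "T \<le> t" for t
    using normal_run.not_LC_persists[OF N1 pV nlc _ that] by simp
  then show ?thesis using pV by (metis le_SucI)
next
  case True
  then obtain p where pV: "p \<in> V" and nlc: "\<not> LocallyCorrect K2 E (R2 (e T)) p"
    using not_wu WU_i_iff_LocallyCorrect[OF k1 G] WU_i_iff_LocallyCorrect[OF k2 G] by (auto simp: WU_def)
  have "R1 (e (Suc t)) p = R1 (e t) p" if Tt: "T \<le> t" for t
  proof (rule ccontr)
    assume moved: "R1 (e (Suc t)) p \<noteq> R1 (e t) p"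
    then have ns: "NormalStepI K1 E (R1 (e t)) p" "R1 (e (Suc t)) p = phi K1 (R1 (e t) p)"
      using normal_run.normal[OF N1 Tt pV] by (auto simp: normal_move_def)
    then have "0 \<le> R1 (e t) p" "0 \<le> R1 (e (Suc t)) p"
      using phi_in_ring[of "R1 (e t) p" K1] by (auto simp: NormalStepI_def ring_iff)
    moreover have "\<not> LocallyCorrect K2 E (R2 (e t)) p"
      using normal_run.not_LC_persists[OF N2 pV nlc _ Tt] by simp
    ultimately show False
      using step_R1[OF steps[of t], of p] moved a1 by (auto simp: ConvergenceStep_def tailS_iff)
  qed
  then show ?thesis using pV by blast
qed

text \<open>An infinite execution reaches WU: once only normal moves remain, a violation of WU would
 freeze one process, hence all processes, in layer 1 -- but every step changes some \<open>r_1\<close> or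
 makes a non-normal move in layer 2.\<close>

lemma infinite_execution_WU:
  assumes G: "connected_graph V E"
    and a1: "\<alpha>1 \<ge> 1" and a2: "\<alpha>2 \<ge> 1" and k1: "K1 \<ge> 3" and k2: "K2 \<ge> 3"
    and aT1: "\<alpha>1 \<ge> int (T_G E)" and aT2: "\<alpha>2 \<ge> int (T_G E)"
    and init: "registers_in_domain V \<alpha>1 K1 \<alpha>2 K2 (e 0)"
    and steps: "\<And>i. ssdc_step V E \<alpha>1 K1 \<alpha>2 K2 \<rho> cond cond1 Init Comp (e i) (e (Suc i))"
  shows "\<exists>i. WU V E K1 K2 (e i)"
proof -
  have Gg: "graph V E" and conn: "\<And>u v. u \<in> V \<Longrightarrow> v \<in> V \<Longrightarrow> (u, v) \<in> {(x, y). E x y}\<^sup>*"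
    using G by (auto simp: connected_graph_def)
  interpret L1: layer V E \<alpha>1 K1 "\<lambda>t. R1 (e t)"
    using Gg a1 k1 init step_R1_layer_move[OF steps]
    by unfold_locales (auto simp: registers_in_domain_def chi_iff[OF a1 k1])
  interpret L2: layer V E \<alpha>2 K2 "\<lambda>t. R2 (e t)"
    using Gg a2 k2 init step_R2[OF steps]
    by unfold_locales (auto simp: registers_in_domain_def chi_iff[OF a2 k2])
  obtain T1 T2 where
    T1: "\<forall>t\<ge>T1. \<forall>p\<in>V. normal_move K1 E (R1 (e t)) (R1 (e (Suc t))) p" and
    T2: "\<forall>t\<ge>T2. \<forall>p\<in>V. normal_move K2 E (R2 (e t)) (R2 (e (Suc t))) p"
    using L1.eventually_normal[OF aT1] L2.eventually_normal[OF aT2] by blast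
  define T where "T = max T1 T2"
  have N1: "normal_run V E K1 (\<lambda>t. R1 (e t)) T" and N2: "normal_run V E K2 (\<lambda>t. R2 (e t)) T"
    using Gg k1 k2 T1 T2 by (unfold_locales) (auto simp: T_def)
  have "WU V E K1 K2 (e T)"
  proof (rule ccontr)
    assume "\<not> WU V E K1 K2 (e T)"
    from not_WU_frozen_process[OF Gg k1 k2 a1 steps N1 N2 this]
    obtain p0 where "p0 \<in> V" "\<And>t. T \<le> t \<Longrightarrow> R1 (e (Suc t)) p0 = R1 (e t) p0" by blast
    from normal_run.freeze_all[OF N1 conn this]
    obtain t1 where t1: "\<forall>t\<ge>t1. \<forall>q\<in>V. R1 (e (Suc t)) q = R1 (e t) q" by blast
    obtain q where "q \<in> V" "R1 (e (Suc (max t1 T))) q \<noteq> R1 (e (max t1 T)) q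
        \<or> \<not> normal_move K2 E (R2 (e (max t1 T))) (R2 (e (Suc (max t1 T)))) q"
      using step_progress[OF steps k1 a1 a2] by blast
    then show False using t1 normal_run.normal[OF N2, of "max t1 T" q] by auto
  qed
  then show ?thesis by blast
qed


lemma finite_execution_WU:
  assumes G: "graph V E" and a1: "\<alpha>1 \<ge> 1" and a2: "\<alpha>2 \<ge> 1" and k1: "K1 \<ge> 3" and k2: "K2 \<ge> 3"
    and mx: "maximal_execution V E \<alpha>1 K1 \<alpha>2 K2 \<rho> cond cond1 Init Comp e (enat n)"
    and init: "registers_in_domain V \<alpha>1 K1 \<alpha>2 K2 (e 0)"
  shows "WU V E K1 K2 (e n)"
proof -
  have "registers_in_domain V \<alpha>1 K1 \<alpha>2 K2 (e i)" if "i \<le> n" for i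
    using that
  proof (induction i)
    case (Suc i)
    have "ssdc_step V E \<alpha>1 K1 \<alpha>2 K2 \<rho> cond cond1 Init Comp (e i) (e (Suc i))"
      using mx Suc.prems by (simp add: maximal_execution_def)
    with Suc show ?case using registers_in_domain_step[OF a1 a2 k1 k2] by simp
  qed (use init in simp)
  moreover have "terminal V E \<alpha>1 K1 \<alpha>2 K2 (e n)" using mx by (simp add: maximal_execution_def)
  ultimately show ?thesis using terminal_WU[OF G a1 a2 k1 k2] by blast
qed


theorem proposition1:
  fixes V :: "'v set" and E :: "'v \<Rightarrow> 'v \<Rightarrow> bool"
    and \<alpha>1 K1 \<alpha>2 K2 \<rho> :: int
    and cond cond1 :: "'v \<Rightarrow> ('v, 's) config \<Rightarrow> bool"
    and Init Comp :: "'v \<Rightarrow> ('v, 's) config \<Rightarrow> 's"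
  assumes G: "connected_graph V E"
    and a1: "\<alpha>1 \<ge> 1" and a2: "\<alpha>2 \<ge> 1" and k1: "K1 \<ge> 3" and k2: "K2 \<ge> 3" and rho: "\<rho> \<ge> 1"
    and aT1: "\<alpha>1 \<ge> int (T_G E)" and aT2: "\<alpha>2 \<ge> int (T_G E)"
    and kC1: "K1 > int (C_G V E)" and kC2: "K2 > int (C_G V E)"
  shows
    "(\<forall>\<gamma> \<gamma>'. WU V E K1 K2 \<gamma> \<longrightarrow>
        ssdc_step V E \<alpha>1 K1 \<alpha>2 K2 \<rho> cond cond1 Init Comp \<gamma> \<gamma>' \<longrightarrow> WU V E K1 K2 \<gamma>')
     \<and>
     (\<forall>e N. (\<forall>p\<in>V. R1 (e 0) p \<in> chi \<alpha>1 K1 \<and> R2 (e 0) p \<in> chi \<alpha>2 K2) \<longrightarrow>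
        maximal_execution V E \<alpha>1 K1 \<alpha>2 K2 \<rho> cond cond1 Init Comp e N \<longrightarrow>
        (\<exists>i. enat i \<le> N \<and> WU V E K1 K2 (e i)))"
proof (intro conjI allI impI)
  have Gg: "graph V E" using G by (simp add: connected_graph_def)
  show "WU V E K1 K2 \<gamma>'"
    if "WU V E K1 K2 \<gamma>" "ssdc_step V E \<alpha>1 K1 \<alpha>2 K2 \<rho> cond cond1 Init Comp \<gamma> \<gamma>'" for \<gamma> \<gamma>'
    using WU_closed[OF Gg k1 k2 that] .
  fix e N
  assume "\<forall>p\<in>V. R1 (e 0) p \<in> chi \<alpha>1 K1 \<and> R2 (e 0) p \<in> chi \<alpha>2 K2"
    and mx: "maximal_execution V E \<alpha>1 K1 \<alpha>2 K2 \<rho> cond cond1 Init Comp e N"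
  then have init: "registers_in_domain V \<alpha>1 K1 \<alpha>2 K2 (e 0)" by (simp add: registers_in_domain_def)
  show "\<exists>i. enat i \<le> N \<and> WU V E K1 K2 (e i)"
  proof (cases N)
    case (enat n)
    then show ?thesis using finite_execution_WU[OF Gg a1 a2 k1 k2 mx[unfolded enat] init] by auto
  next
    case infinity
    then have "\<And>i. ssdc_step V E \<alpha>1 K1 \<alpha>2 K2 \<rho> cond cond1 Init Comp (e i) (e (Suc i))"
      using mx by (simp add: maximal_execution_def)
    from infinite_execution_WU[OF G a1 a2 k1 k2 aT1 aT2 init this] show ?thesis
      using infinity by simp
  qed
qed

end
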